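(* For the semi-Riemannian spectral triple $(\mathcal{A}_\theta,\mathcal{H},D)$ (noncommutative torus) and every $m\ge 2$, $$\pi(\Omega^m\mathcal{A}_\theta)=\Big\{\sum_j a^j\gamma(v_1^j)\cdots\gamma(v_m^j): a^j\in\mathcal{A}_\theta,\ v_i^j\in\mathbb{R}^n\Big\},$$ $$\pi(dj_0\cap\Omega^m\mathcal{A}_\theta)=\Big\{\sum_j a^j\gamma(v_1^j)\cdots\gamma(v_{m-2}^j): a^j\in\mathcal{A}_\theta,\ v_i^j\in\mathbb{R}^n\Big\}$$ (finite sums; for $m=2$ the second set is $\mathcal{A}_\theta$). The first formula holds also for $m=1$.
   Context: $\mathcal{A}_\theta$ is the smooth noncommutative torus: $\theta$ a real antisymmetric bilinear form on $\mathbb{R}^n$, $\mathcal{A}_\theta=\{\sum_{y\in\mathbb{Z}^n}a(y)u(y): a \text{ rapidly decreasing}\}$ with unitaries satisfying $u(y_1)u(y_2)=e^{\mathrm{i}\pi\theta(y_1,y_2)}u(y_1+y_2)$, trace $\tau(\sum a(y)u(y))=a(0)$, GNS space $\mathcal{H}_\tau$, derivations $\delta_j(\sum a(y)u(y))=2\pi\mathrm{i}\sum y_ja(y)u(y)$. $\Delta_{n,k}$ is the spinor module of the complex Clifford algebra of $q_{n,k}(x)=-x_1^2-\dots-x_k^2+x_{k+1}^2+\dots+x_n^2$ with Clifford map $\gamma:\mathbb{R}^n\to\mathrm{End}(\Delta_{n,k})$, $\gamma(v)^2=q_{n,k}(v)$; $\gamma_i=\gamma(e_i)$ for a basis with $\gamma_i^2=-1$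 ($i\le k$), $+1$ ($i>k$). $\mathcal{H}=\mathcal{H}_\tau\otimes\Delta_{n,k}$ with $\mathcal{A}_\theta$ acting by left multiplication on the first factor, and $D$ the closure of $\mathrm{i}^{k-1}\sum_i\gamma_i\delta_i$ on $\mathcal{A}_\theta\otimes\Delta_{n,k}$. $\Omega\mathcal{A}_\theta=\bigoplus_m\Omega^m\mathcal{A}_\theta$ is the universal differential envelope (spanned by $a_0\,da_1\cdots da_m$, with universal differential $d$), $\pi(a_0da_1\cdots da_m)=a_0[D,a_1]\cdots[D,a_m]$, and $j_0=\bigoplus_m\{\omega\in\Omega^m\mathcal{A}_\theta:\pi(\omega)=0\}$. *)

theory Defs
  imports "HOL-Analysis.Analysis"
begin

(* Lattice Z^n is int^'n, R^n is real^'n; the index type 'n has CARD('n) = n elements. *)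

definition rv :: "int^'n \<Rightarrow> real^'n" where
  "rv y = (\<chi> i. real_of_int (y $ i))"

definition rapid :: "(int^'n \<Rightarrow> 'b::real_normed_vector) \<Rightarrow> bool" where
  "rapid f \<longleftrightarrow> (\<forall>p::nat. \<exists>C. \<forall>y. (1 + norm (rv y)) ^ p * norm (f y) \<le> C)"

(* smooth noncommutative torus: elements sum_y a(y) u(y) represented by coefficient functions a *)
definition Atheta :: "(int^'n \<Rightarrow> complex) set" where
  "Atheta = {a. rapid a}"

(* the core A_theta (x) Delta inside H = H_tau (x) Delta = l^2(Z^n, C^N):
   rapidly decreasing C^N-valued coefficient functions *)
definition Hdom :: "(int^'n \<Rightarrow> complex^'s) set" where
  "Hdom = {xi. rapid xi}"

(* left multiplication by a on the first tensor factor: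
   (sum a(y) u(y)) (sum xi(z) u(z)) = sum_x (sum_y a(y) e^{i pi theta(y,x-y)} xi(x-y)) u(x) *)
definition lmult :: "(real^'n \<Rightarrow> real^'n \<Rightarrow> real) \<Rightarrow> (int^'n \<Rightarrow> complex)
    \<Rightarrow> (int^'n \<Rightarrow> complex^'s) \<Rightarrow> (int^'n \<Rightarrow> complex^'s)" where
  "lmult \<theta> a xi = (\<lambda>x. infsum (\<lambda>y. (a y * exp (\<i> * complex_of_real (pi * \<theta> (rv y) (rv (x - y))))) *s xi (x - y)) UNIV)"

definition qform :: "'n::finite set \<Rightarrow> real^'n \<Rightarrow> real" where
  "qform K v = (\<Sum>i\<in>UNIV. (if i \<in> K then -1 else 1) * (v $ i)^2)"

(* action of an endomorphism of Delta on the second tensor factor *)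
definition spin_act :: "complex^'s^'s \<Rightarrow> (int^'n \<Rightarrow> complex^'s) \<Rightarrow> (int^'n \<Rightarrow> complex^'s)" where
  "spin_act T xi = (\<lambda>x. T *v xi x)"

(* D = i^{k-1} sum_i gamma_i delta_i, delta_i(u(y)) = 2 pi i y_i u(y), gamma_i = gamma(e_i) *)
definition Dirac :: "'n::finite set \<Rightarrow> (real^'n \<Rightarrow> complex^'s^'s) \<Rightarrow> (int^'n \<Rightarrow> complex^'s) \<Rightarrow> (int^'n \<Rightarrow> complex^'s)" where
  "Dirac K \<gamma> xi = (\<lambda>x. (\<i> powi (int (card K) - 1)) *s
      (\<Sum>i\<in>UNIV. (2 * complex_of_real pi * \<i> * of_int (x $ i)) *s (\<gamma> (axis i 1) *v xi x)))"

definition commD :: "(real^'n \<Rightarrow> real^'n \<Rightarrow> real) \<Rightarrow> 'n::finite set \<Rightarrow> (real^'n \<Rightarrow> complex^'s^'s)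
    \<Rightarrow> (int^'n \<Rightarrow> complex) \<Rightarrow> (int^'n \<Rightarrow> complex^'s) \<Rightarrow> (int^'n \<Rightarrow> complex^'s)" where
  "commD \<theta> K \<gamma> a xi = (\<lambda>x. Dirac K \<gamma> (lmult \<theta> a xi) x - lmult \<theta> a (Dirac K \<gamma> xi) x)"

(* pi(a0 da1 ... dam) = a0 [D,a1] ... [D,am], given (a0, [a1,...,am]) *)
definition pi_form :: "(real^'n \<Rightarrow> real^'n \<Rightarrow> real) \<Rightarrow> 'n::finite set \<Rightarrow> (real^'n \<Rightarrow> complex^'s^'s)
    \<Rightarrow> (int^'n \<Rightarrow> complex) \<times> (int^'n \<Rightarrow> complex) list
    \<Rightarrow> (int^'n \<Rightarrow> complex^'s) \<Rightarrow> (int^'n \<Rightarrow> complex^'s)" where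
  "pi_form \<theta> K \<gamma> w = lmult \<theta> (fst w) \<circ> foldr (\<lambda>a T. commD \<theta> K \<gamma> a \<circ> T) (snd w) id"

(* pi(d(a0 da1 ... dam)) = pi(da0 da1 ... dam) = [D,a0][D,a1] ... [D,am] *)
definition pi_dform :: "(real^'n \<Rightarrow> real^'n \<Rightarrow> real) \<Rightarrow> 'n::finite set \<Rightarrow> (real^'n \<Rightarrow> complex^'s^'s)
    \<Rightarrow> (int^'n \<Rightarrow> complex) \<times> (int^'n \<Rightarrow> complex) list
    \<Rightarrow> (int^'n \<Rightarrow> complex^'s) \<Rightarrow> (int^'n \<Rightarrow> complex^'s)" where
  "pi_dform \<theta> K \<gamma> w = foldr (\<lambda>a T. commD \<theta> K \<gamma> a \<circ> T) (fst w # snd w) id"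

definition cliff_prod :: "(real^'n \<Rightarrow> complex^'s^'s) \<Rightarrow> (real^'n) list \<Rightarrow> complex^'s^'s" where
  "cliff_prod \<gamma> vs = foldr (\<lambda>v M. \<gamma> v ** M) vs (mat 1)"

definition gamma_op :: "(real^'n \<Rightarrow> real^'n \<Rightarrow> real) \<Rightarrow> (real^'n \<Rightarrow> complex^'s^'s)
    \<Rightarrow> (int^'n \<Rightarrow> complex) \<times> (real^'n) list
    \<Rightarrow> (int^'n \<Rightarrow> complex^'s) \<Rightarrow> (int^'n \<Rightarrow> complex^'s)" where
  "gamma_op \<theta> \<gamma> w = lmult \<theta> (fst w) \<circ> spin_act (cliff_prod \<gamma> (snd w))"

definition opsum :: "('w \<Rightarrow> (int^'n \<Rightarrow> complex^'s) \<Rightarrow> (int^'n \<Rightarrow> complex^'s)) \<Rightarrow> 'w list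
    \<Rightarrow> (int^'n \<Rightarrow> complex^'s) \<Rightarrow> (int^'n \<Rightarrow> complex^'s)" where
  "opsum F L = (\<lambda>xi x. sum_list (map (\<lambda>w. F w xi x) L))"

end

(* Every operator involved acts on the lattice picture of H as a twisted convolution
   \<xi> \<mapsto> (x \<mapsto> \<Sum>y e^{i\<pi>\<theta>(y, x - y)} K(y) \<xi>(x - y)) with a rapidly decreasing matrix-valued
   kernel K; such operators compose by twisted convolution of kernels and determine their kernels.
   Left multiplication by a has kernel a(y) 1 and [D, a] has kernel c a(y) \<gamma>(y) for a constant c,
   so \<pi>(a0 da1 ... dam) has a kernel in the A_\<theta>-span of the products \<gamma>(v1) ... \<gamma>(vm).
   Conversely, taking the ai to be unitaries u(yi) realises every kernel g \<gamma>(y1) ... \<gamma>(ym) with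
   lattice points yi, and these span all such kernels.
   For the junk: by the anticommutation relations, the kernel of \<pi>(d\<omega>) is c \<gamma>(x) times the kernel
   of \<pi>(\<omega>) plus a kernel of Clifford degree m - 2.  When \<pi>(\<omega>) = 0 only the latter survives, and
   pairs of forms built from u(e) and u(-e) realise every kernel of degree m - 2. *)

theory Submission
  imports Defs
begin

lemma rv_nth: "rv y $ i = real_of_int (y $ i)"
  by (simp add: rv_def)

lemma rv_zero [simp]: "rv 0 = 0"
  by (simp add: rv_def vec_eq_iff)

lemma rv_add: "rv (x + y) = rv x + rv y"
  and rv_diff: "rv (x - y) = rv x - rv y"
  and rv_minus: "rv (- x) = - rv x"
  and rv_axis: "rv (axis i 1) = axis i 1"
  by (simp_all add: rv_def vec_eq_iff axis_def)

lemma one_plus_norm_add_le: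
  fixes a b :: "'a::real_normed_vector"
  shows "1 + norm (a + b) \<le> (1 + norm a) * (1 + norm b)"
proof -
  have "(1 + norm a) * (1 + norm b) = 1 + norm a + norm b + norm a * norm b"
    by (simp add: algebra_simps)
  then show ?thesis
    using norm_triangle_ineq[of a b] mult_nonneg_nonneg[OF norm_ge_zero norm_ge_zero, of a b]
    by linarith
qed

lemma weight_power_le:
  "(1 + norm (rv x)) ^ p \<le> (1 + norm (rv y)) ^ p * (1 + norm (rv (x - y))) ^ p"
proof -
  have "rv x = rv y + rv (x - y)"
    by (simp add: rv_diff)
  then have "1 + norm (rv x) \<le> (1 + norm (rv y)) * (1 + norm (rv (x - y)))"
    by (metis one_plus_norm_add_le)
  then show ?thesis
    by (metis power_mono power_mult_distrib add_nonneg_nonneg norm_ge_zero zero_le_one)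
qed

subsection \<open>Rapidly decreasing functions\<close>

lemma rapidD: "rapid f \<Longrightarrow> \<exists>C. \<forall>y. (1 + norm (rv y)) ^ p * norm (f y) \<le> C"
  by (simp add: rapid_def)

lemma rapid_bounded: "rapid f \<Longrightarrow> \<exists>C. \<forall>y. norm (f y) \<le> C"
  using rapidD[of f 0] by simp

lemma rapid_dominated_poly:
  assumes "rapid f" "0 \<le> c" "\<And>y. norm (g y) \<le> c * (1 + norm (rv y)) ^ k * norm (f y)"
  shows "rapid g"
  unfolding rapid_def
proof
  fix p
  obtain C where C: "\<And>y. (1 + norm (rv y)) ^ (p + k) * norm (f y) \<le> C"
    using rapidD[OF assms(1)] by blast
  have "(1 + norm (rv y)) ^ p * norm (g y) \<le> c * C" for y
  proof -
    have "(1 + norm (rv y)) ^ p * norm (g y) \<le> (1 + norm (rv y)) ^ p * (c * (1 + norm (rv y)) ^ k * norm (f y))"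
      by (intro mult_left_mono assms(3)) simp
    also have "\<dots> = c * ((1 + norm (rv y)) ^ (p + k) * norm (f y))"
      by (simp add: power_add algebra_simps)
    also have "\<dots> \<le> c * C"
      by (intro mult_left_mono C assms(2))
    finally show ?thesis .
  qed
  then show "\<exists>C. \<forall>y. (1 + norm (rv y)) ^ p * norm (g y) \<le> C"
    by blast
qed

lemma rapid_dominated:
  "rapid f \<Longrightarrow> 0 \<le> c \<Longrightarrow> (\<And>y. norm (g y) \<le> c * norm (f y)) \<Longrightarrow> rapid g"
  by (rule rapid_dominated_poly[where k = 0]) auto

lemma rapid_zero: "rapid (\<lambda>y. 0)"
  by (auto simp: rapid_def)

lemma rapid_add:
  assumes "rapid f" "rapid g"
  shows "rapid (\<lambda>y. f y + g y)"
  unfolding rapid_def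
proof
  fix p
  obtain C1 where C1: "\<And>y. (1 + norm (rv y)) ^ p * norm (f y) \<le> C1"
    using rapidD[OF assms(1)] by blast
  obtain C2 where C2: "\<And>y. (1 + norm (rv y)) ^ p * norm (g y) \<le> C2"
    using rapidD[OF assms(2)] by blast
  have "(1 + norm (rv y)) ^ p * norm (f y + g y) \<le> C1 + C2" for y
  proof -
    have "(1 + norm (rv y)) ^ p * norm (f y + g y) \<le> (1 + norm (rv y)) ^ p * (norm (f y) + norm (g y))"
      by (intro mult_left_mono norm_triangle_ineq) simp
    then show ?thesis
      using C1[of y] C2[of y] by (simp add: algebra_simps)
  qed
  then show "\<exists>C. \<forall>y. (1 + norm (rv y)) ^ p * norm (f y + g y) \<le> C"
    by blast
qed

lemma rapid_sum_list:
  "(\<And>w. w \<in> set L \<Longrightarrow> rapid (f w)) \<Longrightarrow> rapid (\<lambda>y. \<Sum>w\<leftarrow>L. f w y)"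
  by (induction L) (auto intro: rapid_add rapid_zero)

lemma rapid_single_support:
  assumes "\<And>y. y \<noteq> y0 \<Longrightarrow> f y = 0"
  shows "rapid f"
  unfolding rapid_def
proof
  fix p
  have "(1 + norm (rv y)) ^ p * norm (f y) \<le> (1 + norm (rv y0)) ^ p * norm (f y0)" for y
    by (cases "y = y0") (auto simp: assms)
  then show "\<exists>C. \<forall>y. (1 + norm (rv y)) ^ p * norm (f y) \<le> C"
    by blast
qed

lemma rapid_shift:
  fixes g :: "int^'n::finite \<Rightarrow> complex"
  assumes g: "rapid g" and B: "\<And>w. norm (c w) \<le> B"
  shows "rapid (\<lambda>w. c w * g (w + s))"
  unfolding rapid_def
proof
  fix p
  obtain C where C: "\<And>v. (1 + norm (rv v)) ^ p * norm (g v) \<le> C"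
    using rapidD[OF g] by blast
  have B0: "0 \<le> B"
    using B[of 0] norm_ge_zero order_trans by blast
  have "(1 + norm (rv w)) ^ p * norm (c w * g (w + s)) \<le> B * (1 + norm (rv (- s))) ^ p * C" for w
  proof -
    have "(1 + norm (rv w)) ^ p \<le> (1 + norm (rv (- s))) ^ p * (1 + norm (rv (w + s))) ^ p"
      using weight_power_le[of w p "- s"] by simp
    then have "(1 + norm (rv w)) ^ p * norm (c w * g (w + s))
        \<le> ((1 + norm (rv (- s))) ^ p * (1 + norm (rv (w + s))) ^ p) * (B * norm (g (w + s)))"
      by (intro mult_mono) (auto simp: norm_mult intro: mult_right_mono B)
    also have "\<dots> = B * (1 + norm (rv (- s))) ^ p * ((1 + norm (rv (w + s))) ^ p * norm (g (w + s)))"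
      by (simp add: mult_ac)
    also have "\<dots> \<le> B * (1 + norm (rv (- s))) ^ p * C"
      by (intro mult_left_mono C) (simp add: B0)
    finally show ?thesis .
  qed
  then show "\<exists>C'. \<forall>w. (1 + norm (rv w)) ^ p * norm (c w * g (w + s)) \<le> C'"
    by blast
qed

lemma Atheta_scale: "a \<in> Atheta \<Longrightarrow> (\<lambda>y. c * a y) \<in> Atheta"
  unfolding Atheta_def by (auto intro!: rapid_dominated[of a "norm c"] simp: norm_mult)

lemma Atheta_coordinate_mult: "a \<in> Atheta \<Longrightarrow> (\<lambda>y. complex_of_real (rv y $ i) * a y) \<in> Atheta"
  unfolding Atheta_def
proof (safe, rule rapid_dominated_poly[where c = 1 and k = 1])
  fix y
  have "\<bar>rv y $ i\<bar> \<le> norm (rv y)"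
    by (rule component_le_norm_cart)
  then show "norm (complex_of_real (rv y $ i) * a y) \<le> 1 * (1 + norm (rv y)) ^ 1 * norm (a y)"
    by (auto simp: norm_mult intro!: mult_right_mono)
qed auto

lemma qform_bound: "\<bar>qform K (v::real^'n::finite)\<bar> \<le> real CARD('n) * (1 + norm v)\<^sup>2"
proof -
  have "\<bar>qform K v\<bar> \<le> (\<Sum>i\<in>UNIV. \<bar>(if i \<in> K then -1 else 1) * (v $ i)\<^sup>2\<bar>)"
    unfolding qform_def by (rule sum_abs)
  also have "\<dots> \<le> (\<Sum>i\<in>(UNIV::'n set). (1 + norm v)\<^sup>2)"
  proof (rule sum_mono)
    fix i
    have "\<bar>v $ i\<bar> \<le> 1 + norm v"
      using component_le_norm_cart[of v i] by linarith
    then have "(v $ i)\<^sup>2 \<le> (1 + norm v)\<^sup>2"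
      by (metis abs_le_square_iff abs_of_nonneg add_nonneg_nonneg norm_ge_zero zero_le_one power2_abs)
    then show "\<bar>(if i \<in> K then -1 else 1) * (v $ i)\<^sup>2\<bar> \<le> (1 + norm v)\<^sup>2"
      by auto
  qed
  finally show ?thesis
    by simp
qed

lemma Atheta_qform_mult:
  "a \<in> Atheta \<Longrightarrow> (\<lambda>y::int^'n::finite. complex_of_real (qform K (rv y)) * a y) \<in> Atheta"
  unfolding Atheta_def
proof (safe, rule rapid_dominated_poly[where c = "real CARD('n)" and k = 2])
  fix y :: "int^'n"
  show "norm (complex_of_real (qform K (rv y)) * a y) \<le> real CARD('n) * (1 + norm (rv y)) ^ 2 * norm (a y)"
    using qform_bound[of K "rv y"] by (auto simp: norm_mult intro!: mult_right_mono)
qed auto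

definition inv_sq_weight :: "int \<Rightarrow> real" where
  "inv_sq_weight k = 1 / (1 + real_of_int \<bar>k\<bar>)\<^sup>2"

lemma inv_sq_weight_nonneg: "0 \<le> inv_sq_weight k"
  by (simp add: inv_sq_weight_def)

lemma inv_sq_weight_summable: "inv_sq_weight summable_on UNIV"
proof -
  have "summable (\<lambda>n::nat. inverse (real n ^ 2))"
    by (rule inverse_power_summable) simp
  then have "summable (\<lambda>n::nat. inverse (real (Suc n) ^ 2))"
    using summable_Suc_iff[of "\<lambda>n::nat. inverse (real n ^ 2)"] by simp
  then have Suc: "(\<lambda>n::nat. inverse (real (Suc n) ^ 2)) summable_on UNIV"
    by (subst summable_on_UNIV_nonneg_real_iff) auto
  have "(inv_sq_weight \<circ> int) summable_on UNIV"
    using Suc by (simp add: o_def inv_sq_weight_def divide_inverse add.commute)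
  then have nonneg: "inv_sq_weight summable_on range int"
    by (subst summable_on_reindex) (auto simp: inj_on_def)
  have "(inv_sq_weight \<circ> (\<lambda>n::nat. - int n - 1)) summable_on UNIV"
    by (rule summable_on_comparison_test[OF Suc])
       (simp_all add: inv_sq_weight_def divide_inverse add.commute)
  then have neg: "inv_sq_weight summable_on range (\<lambda>n::nat. - int n - 1)"
    by (subst summable_on_reindex) (auto simp: inj_on_def)
  have "range int \<union> range (\<lambda>n::nat. - int n - 1) = UNIV"
  proof -
    have "k \<in> range int \<or> k \<in> range (\<lambda>n::nat. - int n - 1)" for k :: int
      by (cases "0 \<le> k") (auto intro: image_eqI[of _ _ "nat k"] image_eqI[of _ _ "nat (- k - 1)"])
    then show ?thesis
      by blast
  qed
  then show ?thesis
    using summable_on_union[OF nonneg neg] by simp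
qed

lemma inv_sq_weight_prod_summable:
  "(\<lambda>y::int^'n::finite. \<Prod>i\<in>UNIV. inv_sq_weight (y $ i)) summable_on UNIV"
proof (rule nonneg_bdd_above_summable_on)
  show "0 \<le> (\<Prod>i\<in>UNIV. inv_sq_weight (y $ i))" for y :: "int^'n"
    by (simp add: inv_sq_weight_nonneg prod_nonneg)
  define S where "S = infsum inv_sq_weight UNIV"
  have "(\<Sum>y\<in>F. \<Prod>i\<in>UNIV. inv_sq_weight (y $ i)) \<le> (\<Prod>i\<in>(UNIV::'n set). S)"
    if "finite F" for F :: "(int^'n) set"
  proof -
    define B where "B = (\<Union>i. (\<lambda>y. y $ i) ` F)"
    have fB: "finite B"
      unfolding B_def using that by simp
    define P where "P = PiE (UNIV::'n set) (\<lambda>_. B)"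
    have "F \<subseteq> vec_lambda ` P"
    proof
      fix y assume "y \<in> F"
      then have "(\<lambda>i. y $ i) \<in> P"
        unfolding P_def B_def by auto
      then show "y \<in> vec_lambda ` P"
        by (metis image_eqI vec_nth_inverse)
    qed
    then have "(\<Sum>y\<in>F. \<Prod>i\<in>UNIV. inv_sq_weight (y $ i)) \<le> (\<Sum>y\<in>vec_lambda ` P. \<Prod>i\<in>UNIV. inv_sq_weight (y $ i))"
      by (intro sum_mono2) (simp_all add: P_def fB finite_PiE inv_sq_weight_nonneg prod_nonneg)
    also have "\<dots> = (\<Sum>g\<in>P. \<Prod>i\<in>UNIV. inv_sq_weight (g i))"
      by (subst sum.reindex) (auto simp: inj_on_def vec_lambda_inject)
    also have "\<dots> = (\<Prod>i\<in>(UNIV::'n set). \<Sum>k\<in>B. inv_sq_weight k)"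
      unfolding P_def by (subst prod_sum_PiE) (auto simp: fB)
    also have "\<dots> \<le> (\<Prod>i\<in>(UNIV::'n set). S)"
      by (rule prod_mono)
         (auto simp: S_def sum_nonneg inv_sq_weight_nonneg
           intro!: finite_sum_le_infsum inv_sq_weight_summable fB)
    finally show ?thesis .
  qed
  then show "bdd_above (sum (\<lambda>y::int^'n. \<Prod>i\<in>UNIV. inv_sq_weight (y $ i)) ` {F. F \<subseteq> UNIV \<and> finite F})"
    by (intro bdd_aboveI2) auto
qed

lemma rapid_norm_summable:
  fixes f :: "int^'n::finite \<Rightarrow> 'b::real_normed_vector"
  assumes "rapid f"
  shows "(\<lambda>y. norm (f y)) summable_on UNIV"
proof -
  obtain C where C: "\<And>y. (1 + norm (rv y)) ^ (2 * CARD('n)) * norm (f y) \<le> C"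
    using rapidD[OF assms] by blast
  show ?thesis
  proof (rule summable_on_comparison_test)
    show "(\<lambda>y. C * (\<Prod>i\<in>UNIV. inv_sq_weight (y $ i))) summable_on UNIV"
      by (rule summable_on_cmult_right[OF inv_sq_weight_prod_summable])
    fix y :: "int^'n"
    show "0 \<le> norm (f y)"
      by simp
    define P where "P = (\<Prod>i\<in>UNIV. (1 + real_of_int \<bar>y $ i\<bar>)\<^sup>2)"
    have "P \<le> (\<Prod>i\<in>(UNIV::'n set). (1 + norm (rv y))\<^sup>2)"
      unfolding P_def using component_le_norm_cart[of "rv y"]
      by (intro prod_mono power_mono) (auto simp: rv_nth)
    also have "\<dots> = (1 + norm (rv y)) ^ (2 * CARD('n))"
      by (simp only: prod_constant power_mult)
    finally have "norm (f y) * P \<le> norm (f y) * (1 + norm (rv y)) ^ (2 * CARD('n))"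
      by (rule mult_left_mono) simp
    then have "norm (f y) * P \<le> C"
      using C[of y] by (simp add: mult.commute)
    moreover have "0 < P"
      unfolding P_def by (intro prod_pos) auto
    ultimately have "norm (f y) \<le> C / P"
      by (simp add: field_simps)
    also have "C / P = C * (\<Prod>i\<in>UNIV. inv_sq_weight (y $ i))"
      unfolding P_def inv_sq_weight_def
      by (simp add: prod_dividef divide_inverse prod_inversef[symmetric, unfolded o_def])
    finally show "norm (f y) \<le> C * (\<Prod>i\<in>UNIV. inv_sq_weight (y $ i))" .
  qed
qed

lemma rapid_weighted_norm_summable:
  fixes f :: "int^'n::finite \<Rightarrow> 'b::real_normed_vector"
  assumes "rapid f"
  shows "(\<lambda>y. (1 + norm (rv y)) ^ k * norm (f y)) summable_on UNIV"
proof -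
  have "rapid (\<lambda>y. (1 + norm (rv y)) ^ k *\<^sub>R f y)"
    by (rule rapid_dominated_poly[OF assms, of 1 _ k]) simp_all
  then show ?thesis
    using rapid_norm_summable by fastforce
qed

lemma summable_on_dominated:
  fixes f :: "'a \<Rightarrow> 'b::banach"
  assumes "g summable_on A" "\<And>y. y \<in> A \<Longrightarrow> norm (f y) \<le> g y"
  shows "f summable_on A" and "norm (infsum f A) \<le> infsum g A"
proof -
  have ns: "(\<lambda>y. norm (f y)) summable_on A"
    by (rule Infinite_Sum.abs_summable_on_comparison_test'[OF assms])
  then show "f summable_on A"
    by (rule abs_summable_summable)
  have "norm (infsum f A) \<le> infsum (\<lambda>y. norm (f y)) A"
    by (rule norm_infsum_bound[OF ns])
  also have "\<dots> \<le> infsum g A"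
    by (rule infsum_mono[OF ns assms(1)]) (use assms(2) in auto)
  finally show "norm (infsum f A) \<le> infsum g A" .
qed

lemma infsum_bounded_linear:
  "bounded_linear h \<Longrightarrow> f summable_on A \<Longrightarrow> infsum (\<lambda>x. h (f x)) A = h (infsum f A)"
  by (metis has_sum_bounded_linear has_sum_infsum infsumI)

lemma infsum_diff:
  fixes f g :: "'a \<Rightarrow> 'b::{topological_ab_group_add, t2_space}"
  assumes "f summable_on A" "g summable_on A"
  shows "infsum (\<lambda>x. f x - g x) A = infsum f A - infsum g A"
  using infsum_add[OF assms(1) summable_on_uminus[THEN iffD2, OF assms(2)]]
  by (simp add: infsum_uminus)

lemma summable_on_finite_sum:
  fixes f :: "'i \<Rightarrow> 'a \<Rightarrow> 'b::{topological_comm_monoid_add, t2_space}"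
  assumes "finite S" "\<And>j. j \<in> S \<Longrightarrow> f j summable_on A"
  shows "(\<lambda>x. \<Sum>j\<in>S. f j x) summable_on A"
    and "infsum (\<lambda>x. \<Sum>j\<in>S. f j x) A = (\<Sum>j\<in>S. infsum (f j) A)"
  using assms by (induction S rule: finite_induct) (auto simp: infsum_add summable_on_add)

lemma infsum_single_support:
  "(\<And>y. y \<noteq> a \<Longrightarrow> f y = 0) \<Longrightarrow> infsum f UNIV = f a"
  using infsum_cong_neutral[of "{a}" UNIV f f] by auto

lemma infsum_product_reindex:
  fixes F :: "'a::ab_group_add \<times> 'a \<Rightarrow> 'b::banach"
  assumes "F summable_on UNIV"
  shows "infsum (\<lambda>y. infsum (\<lambda>w. F (y, w)) UNIV) UNIV
       = infsum (\<lambda>z. infsum (\<lambda>y. F (y, z - y)) UNIV) UNIV"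
proof -
  have bij: "bij_betw (\<lambda>(y, z). (y, z - y)) UNIV (UNIV :: ('a \<times> 'a) set)"
    by (rule bij_betw_byWitness[where f' = "\<lambda>(y, w). (y, w + y)"]) auto
  have G: "(\<lambda>(y, z). F (y, z - y)) summable_on UNIV \<times> UNIV"
    using summable_on_reindex_bij_betw[OF bij, of F] assms by (simp add: case_prod_unfold)
  have "infsum (\<lambda>y. infsum (\<lambda>w. F (y, w)) UNIV) UNIV = infsum F UNIV"
    using infsum_Sigma_banach[of F UNIV "\<lambda>_. UNIV"] assms by simp
  also have "\<dots> = infsum (\<lambda>(y, z). F (y, z - y)) (UNIV \<times> UNIV)"
    using infsum_reindex_bij_betw[OF bij, of F] by (simp add: case_prod_unfold)
  also have "\<dots> = infsum (\<lambda>y. infsum (\<lambda>z. F (y, z - y)) UNIV) UNIV"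
    using infsum_Sigma_banach[OF G[unfolded UNIV_Times_UNIV[symmetric]]] by simp
  also have "\<dots> = infsum (\<lambda>z. infsum (\<lambda>y. F (y, z - y)) UNIV) UNIV"
    by (rule infsum_swap_banach[OF G])
  finally show ?thesis .
qed

lemma product_summable:
  fixes \<alpha> :: "'a \<Rightarrow> real" and \<beta> :: "'b \<Rightarrow> real"
  assumes "\<alpha> summable_on UNIV" "\<beta> summable_on UNIV" "\<And>y. 0 \<le> \<alpha> y" "\<And>w. 0 \<le> \<beta> w"
  shows "(\<lambda>(y, w). \<alpha> y * \<beta> w) summable_on UNIV"
proof -
  have "(\<lambda>(y, w). \<alpha> y * \<beta> w) summable_on Sigma UNIV (\<lambda>_. UNIV)"
  proof (rule summable_on_SigmaI)
    show "((\<lambda>w. case (y, w) of (y, w) \<Rightarrow> \<alpha> y * \<beta> w) has_sum \<alpha> y * infsum \<beta> UNIV) UNIV" for y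
      using has_sum_cmult_right[OF has_sum_infsum[OF assms(2)], of "\<alpha> y"] by simp
  qed (use assms in \<open>auto intro: summable_on_cmult_left\<close>)
  then show ?thesis
    by simp
qed

definition mscale :: "complex \<Rightarrow> complex^'s^'s \<Rightarrow> complex^'s^'s" where
  "mscale c M = (\<chi> i j. c * M $ i $ j)"

lemma mscale_nth [simp]: "mscale c M $ i $ j = c * M $ i $ j"
  by (simp add: mscale_def)

lemma mscale_one [simp]: "mscale 1 M = M"
  and mscale_zero_left [simp]: "mscale 0 M = 0"
  and mscale_zero_right [simp]: "mscale c 0 = 0"
  and mscale_add_left: "mscale (a + b) M = mscale a M + mscale b M"
  and mscale_add_right: "mscale a (M + N) = mscale a M + mscale a N"
  and mscale_diff_right: "mscale a (M - N) = mscale a M - mscale a N"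
  and mscale_minus_left: "mscale (- a) M = - mscale a M"
  and mscale_minus_right: "mscale a (- M) = - mscale a M"
  and mscale_mscale: "mscale a (mscale b M) = mscale (a * b) M"
  by (simp_all add: vec_eq_iff algebra_simps)

lemma mscale_matrix_vector_mult: "mscale c M *v v = c *s (M *v v)"
  by (simp add: vec_eq_iff matrix_vector_mult_def sum_distrib_left mult.assoc)

lemma mscale_matrix_mult_left: "mscale c M ** N = mscale c (M ** N)"
  and mscale_matrix_mult_right: "M ** mscale c N = mscale c (M ** N)"
  by (simp_all add: vec_eq_iff matrix_matrix_mult_def sum_distrib_left mult_ac)

lemma mat_matrix_mult: "mat c ** M = mscale c M"
  by (simp add: vec_eq_iff matrix_matrix_mult_def mat_def if_distrib if_distribR sum.delta cong: if_cong)

lemma mscale_sum_left: "mscale (sum f S) M = (\<Sum>x\<in>S. mscale (f x) M)"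
  and mscale_sum_right: "mscale c (sum g S) = (\<Sum>x\<in>S. mscale c (g x))"
  by (induction S rule: infinite_finite_induct) (auto simp: mscale_add_left mscale_add_right)

lemma mscale_sum_list_right: "mscale c (\<Sum>w\<leftarrow>L. f w) = (\<Sum>w\<leftarrow>L. mscale c (f w))"
  by (induction L) (auto simp: mscale_add_right)

lemma scaleR_eq_mscale: "r *\<^sub>R M = mscale (complex_of_real r) M"
  by (simp add: vec_eq_iff) (simp add: scaleR_conv_of_real)

lemma matrix_add_rdistrib': "(A + B) ** (C::'a::semiring_1^'n^'n) = A ** C + B ** C"
  by (simp add: vec_eq_iff matrix_matrix_mult_def sum.distrib distrib_right)

lemma matrix_diff_rdistrib': "(A - B) ** (C::'a::ring_1^'n^'n) = A ** C - B ** C"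
  by (simp add: vec_eq_iff matrix_matrix_mult_def sum_subtractf left_diff_distrib)

lemma matrix_neg_left': "(- A) ** (C::'a::ring_1^'n^'n) = - (A ** C)"
  and matrix_neg_right': "C ** (- A) = - (C ** A)"
  by (simp_all add: vec_eq_iff matrix_matrix_mult_def sum_negf)

lemma mat_diff': "mat (c - d) = (mat c - mat d :: 'a::ab_group_add^'n^'n)"
  by (simp add: vec_eq_iff mat_def)

lemma sum_matrix_mult: "sum f S ** (C::complex^'s^'s) = (\<Sum>i\<in>S. f i ** C)"
  by (induction S rule: infinite_finite_induct) (auto simp: matrix_add_rdistrib')

lemma matrix_mult_sum_list: "(G::complex^'s^'s) ** (\<Sum>w\<leftarrow>L. f w) = (\<Sum>w\<leftarrow>L. G ** f w)"
  by (induction L) (auto simp: matrix_add_ldistrib)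

lemma sum_matrix_vector_mult: "sum f S *v (v::complex^'s) = (\<Sum>i\<in>S. f i *v v)"
  by (induction S rule: infinite_finite_induct) (auto simp: matrix_vector_mult_add_rdistrib)

lemma scaleR_matrix_vector_mult: "(r *\<^sub>R (M::complex^'s^'s)) *v v = complex_of_real r *s (M *v v)"
  by (simp add: scaleR_eq_mscale mscale_matrix_vector_mult)

lemma norm_vector_smult: "norm (c *s (v::complex^'s)) = norm c * norm v"
  unfolding norm_vec_def by (simp add: norm_mult L2_set_right_distrib)

lemma norm_mscale: "norm (mscale c M) = norm c * norm M"
proof -
  have "\<And>i. mscale c M $ i = c *s (M $ i)"
    by (simp add: vec_eq_iff)
  then show ?thesis
    unfolding norm_vec_def[of "mscale c M"] norm_vec_def[of M]
    by (simp add: norm_vector_smult L2_set_right_distrib)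
qed

lemma norm_vec_le_sum: "norm (x::'a::real_normed_vector^'s) \<le> (\<Sum>i\<in>UNIV. norm (x $ i))"
  unfolding norm_vec_def by (rule L2_set_le_sum) simp

lemma norm_matrix_entry_le: "norm (M $ i $ j) \<le> norm M"
  using Finite_Cartesian_Product.norm_nth_le[of "M $ i" j] Finite_Cartesian_Product.norm_nth_le[of M i] by linarith

lemma norm_matrix_vector_mult_le:
  "norm ((M::complex^'s^'s) *v (v::complex^'s)) \<le> real CARD('s) ^ 2 * norm M * norm v"
proof -
  have entry: "norm ((M *v v) $ i) \<le> real CARD('s) * (norm M * norm v)" for i
  proof -
    have "norm ((M *v v) $ i) \<le> (\<Sum>j\<in>UNIV. norm (M $ i $ j * v $ j))"
      unfolding matrix_vector_mult_def by (simp add: norm_sum)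
    also have "\<dots> \<le> (\<Sum>j\<in>(UNIV::'s set). norm M * norm v)"
      by (intro sum_mono) (simp add: norm_mult mult_mono norm_matrix_entry_le Finite_Cartesian_Product.norm_nth_le)
    finally show ?thesis
      by simp
  qed
  have "norm (M *v v) \<le> (\<Sum>i\<in>UNIV. norm ((M *v v) $ i))"
    by (rule norm_vec_le_sum)
  also have "\<dots> \<le> (\<Sum>i\<in>(UNIV::'s set). real CARD('s) * (norm M * norm v))"
    using entry by (intro sum_mono) auto
  finally show ?thesis
    by (simp add: power2_eq_square mult_ac)
qed

lemma norm_matrix_mult_le:
  "norm ((M::complex^'s^'s) ** (N::complex^'s^'s)) \<le> real CARD('s) ^ 3 * norm M * norm N"
proof -
  have entry: "norm ((M ** N) $ i $ j) \<le> real CARD('s) * (norm M * norm N)" for i j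
  proof -
    have "norm ((M ** N) $ i $ j) \<le> (\<Sum>k\<in>UNIV. norm (M $ i $ k * N $ k $ j))"
      unfolding matrix_matrix_mult_def by (simp add: norm_sum)
    also have "\<dots> \<le> (\<Sum>k\<in>(UNIV::'s set). norm M * norm N)"
      by (intro sum_mono) (simp add: norm_mult mult_mono norm_matrix_entry_le)
    finally show ?thesis
      by simp
  qed
  have row: "norm ((M ** N) $ i) \<le> real CARD('s) * (real CARD('s) * (norm M * norm N))" for i
  proof -
    have "norm ((M ** N) $ i) \<le> (\<Sum>j\<in>UNIV. norm ((M ** N) $ i $ j))"
      by (rule norm_vec_le_sum)
    also have "\<dots> \<le> (\<Sum>j\<in>(UNIV::'s set). real CARD('s) * (norm M * norm N))"
      using entry by (intro sum_mono) auto
    finally show ?thesis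
      by simp
  qed
  have "norm (M ** N) \<le> (\<Sum>i\<in>UNIV. norm ((M ** N) $ i))"
    by (rule norm_vec_le_sum)
  also have "\<dots> \<le> (\<Sum>i\<in>(UNIV::'s set). real CARD('s) * (real CARD('s) * (norm M * norm N)))"
    using row by (intro sum_mono) auto
  finally show ?thesis
    by (simp add: power3_eq_cube mult_ac)
qed

lemma bounded_linear_vector_smult: "bounded_linear (\<lambda>v::complex^'s. c *s v)"
  and bounded_linear_matrix_vector_mult_left: "bounded_linear (\<lambda>M::complex^'s^'s. M *v v)"
  and bounded_linear_matrix_mult_right: "bounded_linear (\<lambda>N::complex^'s^'s. M ** N)"
  and bounded_linear_mscale: "bounded_linear (\<lambda>M::complex^'s^'s. mscale c M)"
  and bounded_linear_mscale_left: "bounded_linear (\<lambda>c::complex. mscale c (M::complex^'s^'s))"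
  by (rule linear_conv_bounded_linear[THEN iffD1];
      simp add: linear_iff vec_eq_iff algebra_simps matrix_vector_mult_def matrix_matrix_mult_def
        sum.distrib sum_distrib_left scaleR_sum_right)+

subsection \<open>Twisted convolution operators\<close>

definition twist :: "(real^'n \<Rightarrow> real^'n \<Rightarrow> real) \<Rightarrow> int^'n \<Rightarrow> int^'n \<Rightarrow> complex" where
  "twist \<theta> y w = exp (\<i> * complex_of_real (pi * \<theta> (rv y) (rv w)))"

definition kernel_op :: "(real^'n \<Rightarrow> real^'n \<Rightarrow> real) \<Rightarrow> (int^'n \<Rightarrow> complex^'s^'s)
    \<Rightarrow> (int^'n \<Rightarrow> complex^'s) \<Rightarrow> (int^'n \<Rightarrow> complex^'s)" where
  "kernel_op \<theta> K xi = (\<lambda>x. \<Sum>\<^sub>\<infinity>y. twist \<theta> y (x - y) *s (K y *v xi (x - y)))"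

definition kernel_conv :: "(real^'n \<Rightarrow> real^'n \<Rightarrow> real) \<Rightarrow> (int^'n \<Rightarrow> complex^'s^'s)
    \<Rightarrow> (int^'n \<Rightarrow> complex^'s^'s) \<Rightarrow> (int^'n \<Rightarrow> complex^'s^'s)" where
  "kernel_conv \<theta> K L = (\<lambda>z. \<Sum>\<^sub>\<infinity>y. mscale (twist \<theta> y (z - y)) (K y ** L (z - y)))"

definition torus_mult :: "(real^'n \<Rightarrow> real^'n \<Rightarrow> real) \<Rightarrow> (int^'n \<Rightarrow> complex)
    \<Rightarrow> (int^'n \<Rightarrow> complex) \<Rightarrow> int^'n \<Rightarrow> complex" where
  "torus_mult \<theta> a b = (\<lambda>z. \<Sum>\<^sub>\<infinity>y. twist \<theta> y (z - y) * a y * b (z - y))"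

definition unit_kernel :: "int^'n \<Rightarrow> complex^'s^'s" where
  "unit_kernel = (\<lambda>y. if y = 0 then mat 1 else 0)"

lemma norm_twist [simp]: "norm (twist \<theta> y w) = 1"
  unfolding twist_def by (metis norm_exp_i_times of_real_mult)

lemma twist_nonzero [simp]: "twist \<theta> y w \<noteq> 0"
  by (metis norm_twist norm_zero zero_neq_one)

lemma twist_zero_left [simp]: "bilinear \<theta> \<Longrightarrow> twist \<theta> 0 w = 1"
  and twist_zero_right [simp]: "bilinear \<theta> \<Longrightarrow> twist \<theta> y 0 = 1"
  by (simp_all add: twist_def bilinear_lzero bilinear_rzero)

lemma twist_cocycle:
  assumes "bilinear \<theta>"
  shows "twist \<theta> y (x - y) * twist \<theta> (z - y) (x - z) = twist \<theta> z (x - z) * twist \<theta> y (z - y)"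
proof -
  have cocycle: "\<theta> (rv y) (rv (x - y)) + \<theta> (rv (z - y)) (rv (x - z))
      = \<theta> (rv z) (rv (x - z)) + \<theta> (rv y) (rv (z - y))"
    using assms by (simp add: rv_diff bilinear_lsub bilinear_rsub)
  have exp_mult: "exp (\<i> * complex_of_real (pi * a)) * exp (\<i> * complex_of_real (pi * b))
      = exp (\<i> * complex_of_real (pi * (a + b)))" for a b
    by (simp add: exp_add[symmetric] ring_distribs)
  show ?thesis
    unfolding twist_def exp_mult cocycle ..
qed

lemma rapid_infsum_convolution:
  fixes K :: "int^'n::finite \<Rightarrow> 'a::real_normed_vector" and L :: "int^'n \<Rightarrow> 'b::real_normed_vector"
    and h :: "int^'n \<Rightarrow> int^'n \<Rightarrow> 'c::banach"
  assumes K: "rapid K" and L: "rapid L" and c: "0 \<le> c"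
    and h: "\<And>z y. norm (h z y) \<le> c * norm (K y) * norm (L (z - y))"
  shows "h z summable_on UNIV" and "rapid (\<lambda>z. \<Sum>\<^sub>\<infinity>y. h z y)"
proof -
  obtain C where C: "\<And>w. norm (L w) \<le> C"
    using rapid_bounded[OF L] by blast
  have "norm (h z y) \<le> (c * C) * norm (K y)" for z y
    using h[of z y] mult_left_mono[OF C[of "z - y"], of "c * norm (K y)"] c
    by (simp add: mult_ac)
  then show summable: "h z summable_on UNIV" for z
    by (rule summable_on_dominated(1)[OF summable_on_cmult_right[OF rapid_norm_summable[OF K]]])
  show "rapid (\<lambda>z. \<Sum>\<^sub>\<infinity>y. h z y)"
    unfolding rapid_def
  proof
    fix p
    obtain C where C: "\<And>w. (1 + norm (rv w)) ^ p * norm (L w) \<le> C"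
      using rapidD[OF L] by blast
    define G where "G y = (c * C) * ((1 + norm (rv y)) ^ p * norm (K y))" for y
    have G: "G summable_on UNIV"
      unfolding G_def by (rule summable_on_cmult_right[OF rapid_weighted_norm_summable[OF K]])
    have "(1 + norm (rv z)) ^ p * norm (\<Sum>\<^sub>\<infinity>y. h z y) \<le> infsum G UNIV" for z
    proof -
      have "norm ((1 + norm (rv z)) ^ p *\<^sub>R h z y) \<le> G y" for y
      proof -
        have "norm ((1 + norm (rv z)) ^ p *\<^sub>R h z y) = (1 + norm (rv z)) ^ p * norm (h z y)"
          by simp
        also have "\<dots> \<le> (1 + norm (rv y)) ^ p * (1 + norm (rv (z - y))) ^ p * (c * norm (K y) * norm (L (z - y)))"
          by (intro mult_mono weight_power_le h) (simp_all add: c)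
        also have "\<dots> = (c * ((1 + norm (rv y)) ^ p * norm (K y))) * ((1 + norm (rv (z - y))) ^ p * norm (L (z - y)))"
          by (simp add: mult_ac)
        also have "\<dots> \<le> (c * ((1 + norm (rv y)) ^ p * norm (K y))) * C"
          by (intro mult_left_mono C) (simp add: c)
        finally show ?thesis
          by (simp add: G_def mult_ac)
      qed
      then have "norm (\<Sum>\<^sub>\<infinity>y. (1 + norm (rv z)) ^ p *\<^sub>R h z y) \<le> infsum G UNIV"
        by (rule summable_on_dominated(2)[OF G])
      then show ?thesis
        by (simp add: infsum_scaleR_right)
    qed
    then show "\<exists>C. \<forall>z. (1 + norm (rv z)) ^ p * norm (\<Sum>\<^sub>\<infinity>y. h z y) \<le> C"
      by blast
  qed
qed

context
  fixes \<theta> :: "real^'n::finite \<Rightarrow> real^'n \<Rightarrow> real"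
begin

lemma kernel_op_summable:
  fixes K :: "int^'n \<Rightarrow> complex^'s^'s"
  assumes "rapid K" "rapid xi"
  shows "(\<lambda>y. twist \<theta> y (x - y) *s (K y *v xi (x - y))) summable_on UNIV"
  by (rule rapid_infsum_convolution(1)[OF assms, of "real CARD('s) ^ 2"])
     (auto simp: norm_vector_smult norm_matrix_vector_mult_le)

lemma rapid_kernel_op:
  fixes K :: "int^'n \<Rightarrow> complex^'s^'s"
  assumes "rapid K" "rapid xi"
  shows "rapid (kernel_op \<theta> K xi)"
  unfolding kernel_op_def
  by (rule rapid_infsum_convolution(2)[OF assms, of "real CARD('s) ^ 2"])
     (auto simp: norm_vector_smult norm_matrix_vector_mult_le)

lemma kernel_conv_summable:
  fixes K :: "int^'n \<Rightarrow> complex^'s^'s"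
  assumes "rapid K" "rapid L"
  shows "(\<lambda>y. mscale (twist \<theta> y (z - y)) (K y ** L (z - y))) summable_on UNIV"
  by (rule rapid_infsum_convolution(1)[OF assms, of "real CARD('s) ^ 3"])
     (auto simp: norm_mscale norm_matrix_mult_le)

lemma torus_mult_summable:
  assumes "rapid a" "rapid b"
  shows "(\<lambda>y. twist \<theta> y (z - y) * a y * b (z - y)) summable_on UNIV"
  by (rule rapid_infsum_convolution(1)[OF assms, of 1]) (auto simp: norm_mult)

lemma Atheta_torus_mult: "a \<in> Atheta \<Longrightarrow> b \<in> Atheta \<Longrightarrow> torus_mult \<theta> a b \<in> Atheta"
  unfolding Atheta_def torus_mult_def
  by (auto intro: rapid_infsum_convolution(2)[of a b 1] simp: norm_mult)

lemma kernel_op_zero: "kernel_op \<theta> (\<lambda>y. 0) xi = (\<lambda>x. 0)"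
  by (simp add: kernel_op_def)

lemma kernel_op_add:
  fixes K1 :: "int^'n \<Rightarrow> complex^'s^'s"
  assumes "rapid K1" "rapid K2" "rapid xi"
  shows "kernel_op \<theta> (\<lambda>y. K1 y + K2 y) xi x = kernel_op \<theta> K1 xi x + kernel_op \<theta> K2 xi x"
  unfolding kernel_op_def
  by (simp add: matrix_vector_mult_add_rdistrib vector_add_ldistrib
      infsum_add[OF kernel_op_summable[OF assms(1,3)] kernel_op_summable[OF assms(2,3)]])

lemma kernel_op_sum_list:
  fixes f :: "'w \<Rightarrow> int^'n \<Rightarrow> complex^'s^'s"
  assumes "\<And>w. w \<in> set L \<Longrightarrow> rapid (f w)" "rapid xi"
  shows "kernel_op \<theta> (\<lambda>y. \<Sum>w\<leftarrow>L. f w y) xi = (\<lambda>x. \<Sum>w\<leftarrow>L. kernel_op \<theta> (f w) xi x)"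
  using assms(1)
proof (induction L)
  case Nil
  then show ?case
    by (simp add: kernel_op_zero)
next
  case (Cons w L)
  have "rapid (\<lambda>y. \<Sum>w\<leftarrow>L. f w y)"
    using Cons.prems by (intro rapid_sum_list) auto
  then show ?case
    using kernel_op_add[OF _ _ assms(2), of "f w"] Cons by (simp add: fun_eq_iff)
qed

lemma kernel_op_unit_kernel:
  fixes xi :: "int^'n \<Rightarrow> complex^'s"
  assumes "bilinear \<theta>"
  shows "kernel_op \<theta> unit_kernel xi = xi"
proof
  fix x
  have "kernel_op \<theta> unit_kernel xi x
      = twist \<theta> 0 (x - 0) *s ((unit_kernel :: int^'n \<Rightarrow> complex^'s^'s) 0 *v xi (x - 0))"
    unfolding kernel_op_def by (rule infsum_single_support) (simp add: unit_kernel_def)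
  then show "kernel_op \<theta> unit_kernel xi x = xi x"
    using assms by (simp add: unit_kernel_def)
qed

lemma kernel_op_determines_kernel:
  fixes K :: "int^'n \<Rightarrow> complex^'s^'s"
  assumes "bilinear \<theta>" "\<And>xi. xi \<in> Hdom \<Longrightarrow> kernel_op \<theta> K xi = (\<lambda>x. 0)"
  shows "K = (\<lambda>y. 0)"
proof
  fix x
  show "K x = 0"
  proof (subst matrix_eq, intro allI)
    fix s :: "complex^'s"
    define xi :: "int^'n \<Rightarrow> complex^'s" where "xi = (\<lambda>w. if w = 0 then s else 0)"
    have "xi \<in> Hdom"
      unfolding Hdom_def xi_def by (auto intro: rapid_single_support)
    then have "kernel_op \<theta> K xi x = 0"
      using assms(2) by simp
    moreover have "kernel_op \<theta> K xi x = twist \<theta> x (x - x) *s (K x *v xi (x - x))"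
      unfolding kernel_op_def by (rule infsum_single_support) (simp add: xi_def)
    ultimately show "K x *v s = 0 *v s"
      using assms(1) by (simp add: xi_def)
  qed
qed

lemma kernel_op_iterated_summable:
  fixes K L :: "int^'n \<Rightarrow> complex^'s^'s" and xi :: "int^'n \<Rightarrow> complex^'s"
  assumes K: "rapid K" and L: "rapid L" and xi: "rapid xi"
  shows "(\<lambda>(y, w). twist \<theta> y (x - y) *s (K y *v (twist \<theta> w (x - y - w) *s (L w *v xi (x - y - w)))))
    summable_on UNIV"
proof -
  obtain C where C: "\<And>w. norm (xi w) \<le> C"
    using rapid_bounded[OF xi] by blast
  have "0 \<le> C"
    using C[of 0] norm_ge_zero order_trans by blast
  then have dominant: "(\<lambda>(y, w). (real CARD('s) ^ 4 * C * norm (K y)) * norm (L w)) summable_on UNIV"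
    by (intro product_summable) (auto intro!: summable_on_cmult_right rapid_norm_summable K L)
  have bound: "norm (twist \<theta> y (x - y) *s (K y *v (twist \<theta> w (x - y - w) *s (L w *v xi (x - y - w)))))
      \<le> (real CARD('s) ^ 4 * C * norm (K y)) * norm (L w)" for y w
  proof -
    have "norm (twist \<theta> y (x - y) *s (K y *v (twist \<theta> w (x - y - w) *s (L w *v xi (x - y - w)))))
        \<le> real CARD('s) ^ 2 * norm (K y) * norm (L w *v xi (x - y - w))"
      using norm_matrix_vector_mult_le[of "K y" "twist \<theta> w (x - y - w) *s (L w *v xi (x - y - w))"]
      by (simp add: norm_vector_smult)
    also have "\<dots> \<le> real CARD('s) ^ 2 * norm (K y) * (real CARD('s) ^ 2 * norm (L w) * norm (xi (x - y - w)))"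
      by (intro mult_left_mono norm_matrix_vector_mult_le) simp
    also have "\<dots> \<le> real CARD('s) ^ 2 * norm (K y) * (real CARD('s) ^ 2 * norm (L w) * C)"
      by (intro mult_left_mono C) auto
    finally show ?thesis
      by (simp add: mult_ac)
  qed
  show ?thesis
    by (rule summable_on_dominated(1)[OF dominant]) (auto simp: bound split: prod.split)
qed

lemma kernel_op_kernel_op:
  fixes K :: "int^'n \<Rightarrow> complex^'s^'s"
  assumes \<theta>: "bilinear \<theta>" and K: "rapid K" and L: "rapid L" and xi: "rapid xi"
  shows "kernel_op \<theta> K (kernel_op \<theta> L xi) = kernel_op \<theta> (kernel_conv \<theta> K L) xi"
proof
  fix x
  define F where "F = (\<lambda>(y, w). twist \<theta> y (x - y) *s (K y *v (twist \<theta> w (x - y - w) *s (L w *v xi (x - y - w)))))"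
  have inner: "kernel_op \<theta> K (kernel_op \<theta> L xi) x = (\<Sum>\<^sub>\<infinity>y. \<Sum>\<^sub>\<infinity>w. F (y, w))"
    unfolding kernel_op_def F_def
    by (simp add: infsum_bounded_linear[OF bounded_linear_compose[OF bounded_linear_vector_smult
          matrix_vector_mul_bounded_linear] kernel_op_summable[OF L xi]])
  have F: "F summable_on UNIV"
    unfolding F_def by (rule kernel_op_iterated_summable[OF K L xi])
  have "kernel_op \<theta> (kernel_conv \<theta> K L) xi x = (\<Sum>\<^sub>\<infinity>z. \<Sum>\<^sub>\<infinity>y. F (y, z - y))"
    unfolding kernel_op_def
  proof (rule infsum_cong)
    fix z
    have "twist \<theta> z (x - z) *s (kernel_conv \<theta> K L z *v xi (x - z))
        = (\<Sum>\<^sub>\<infinity>y. twist \<theta> z (x - z) *s (mscale (twist \<theta> y (z - y)) (K y ** L (z - y)) *v xi (x - z)))"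
      unfolding kernel_conv_def
      by (rule infsum_bounded_linear[OF bounded_linear_compose[OF bounded_linear_vector_smult
            bounded_linear_matrix_vector_mult_left] kernel_conv_summable[OF K L], symmetric])
    also have "\<dots> = (\<Sum>\<^sub>\<infinity>y. F (y, z - y))"
    proof (rule infsum_cong)
      fix y
      have "F (y, z - y) = (twist \<theta> y (x - y) * twist \<theta> (z - y) (x - z)) *s ((K y ** L (z - y)) *v xi (x - z))"
        by (simp add: F_def vector_scalar_commute vector_smult_assoc matrix_vector_mul_assoc)
      then show "twist \<theta> z (x - z) *s (mscale (twist \<theta> y (z - y)) (K y ** L (z - y)) *v xi (x - z)) = F (y, z - y)"
        by (simp add: twist_cocycle[OF \<theta>] mscale_matrix_vector_mult vector_smult_assoc)
    qed
    finally show "twist \<theta> z (x - z) *s (kernel_conv \<theta> K L z *v xi (x - z)) = (\<Sum>\<^sub>\<infinity>y. F (y, z - y))" .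
  qed
  then show "kernel_op \<theta> K (kernel_op \<theta> L xi) x = kernel_op \<theta> (kernel_conv \<theta> K L) xi x"
    using inner infsum_product_reindex[OF F] by simp
qed

lemma kernel_conv_add_left:
  fixes K1 :: "int^'n \<Rightarrow> complex^'s^'s"
  assumes "rapid K1" "rapid K2" "rapid L"
  shows "kernel_conv \<theta> (\<lambda>y. K1 y + K2 y) L z = kernel_conv \<theta> K1 L z + kernel_conv \<theta> K2 L z"
  unfolding kernel_conv_def
  by (simp add: matrix_add_rdistrib' mscale_add_right
      infsum_add[OF kernel_conv_summable[OF assms(1,3)] kernel_conv_summable[OF assms(2,3)]])

lemma kernel_conv_add_right:
  fixes K :: "int^'n \<Rightarrow> complex^'s^'s"
  assumes "rapid K" "rapid L1" "rapid L2"
  shows "kernel_conv \<theta> K (\<lambda>y. L1 y + L2 y) z = kernel_conv \<theta> K L1 z + kernel_conv \<theta> K L2 z"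
  unfolding kernel_conv_def
  by (simp add: matrix_add_ldistrib mscale_add_right
      infsum_add[OF kernel_conv_summable[OF assms(1,2)] kernel_conv_summable[OF assms(1,3)]])

lemma kernel_conv_zero_left: "kernel_conv \<theta> (\<lambda>y. 0) L = (\<lambda>z. 0)"
  and kernel_conv_zero_right: "kernel_conv \<theta> K (\<lambda>y. 0) = (\<lambda>z. 0)"
  by (simp_all add: kernel_conv_def fun_eq_iff)

lemma kernel_conv_sum_list_left:
  fixes f :: "'w \<Rightarrow> int^'n \<Rightarrow> complex^'s^'s"
  assumes "\<And>w. w \<in> set Ls \<Longrightarrow> rapid (f w)" "rapid L"
  shows "kernel_conv \<theta> (\<lambda>y. \<Sum>w\<leftarrow>Ls. f w y) L z = (\<Sum>w\<leftarrow>Ls. kernel_conv \<theta> (f w) L z)"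
  using assms(1)
proof (induction Ls)
  case (Cons w Ls)
  have "rapid (\<lambda>y. \<Sum>w\<leftarrow>Ls. f w y)"
    using Cons.prems by (intro rapid_sum_list) auto
  then show ?case
    using kernel_conv_add_left[OF _ _ assms(2), of "f w"] Cons by simp
qed (simp add: kernel_conv_zero_left)

lemma kernel_conv_sum_list_right:
  fixes f :: "'w \<Rightarrow> int^'n \<Rightarrow> complex^'s^'s"
  assumes "\<And>w. w \<in> set Ls \<Longrightarrow> rapid (f w)" "rapid K"
  shows "kernel_conv \<theta> K (\<lambda>y. \<Sum>w\<leftarrow>Ls. f w y) z = (\<Sum>w\<leftarrow>Ls. kernel_conv \<theta> K (f w) z)"
  using assms(1)
proof (induction Ls)
  case (Cons w Ls)
  have "rapid (\<lambda>y. \<Sum>w\<leftarrow>Ls. f w y)"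
    using Cons.prems by (intro rapid_sum_list) auto
  then show ?case
    using kernel_conv_add_right[OF assms(2), of "f w"] Cons by simp
qed (simp add: kernel_conv_zero_right)

lemma kernel_conv_tensor:
  assumes "rapid a" "rapid b"
  shows "kernel_conv \<theta> (\<lambda>y. mscale (a y) M) (\<lambda>y. mscale (b y) N)
       = (\<lambda>z. mscale (torus_mult \<theta> a b z) (M ** N))"
proof
  fix z
  have "kernel_conv \<theta> (\<lambda>y. mscale (a y) M) (\<lambda>y. mscale (b y) N) z
      = (\<Sum>\<^sub>\<infinity>y. mscale (twist \<theta> y (z - y) * a y * b (z - y)) (M ** N))"
    unfolding kernel_conv_def
    by (simp add: mscale_matrix_mult_left mscale_matrix_mult_right mscale_mscale mult_ac)
  also have "\<dots> = mscale (torus_mult \<theta> a b z) (M ** N)"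
    unfolding torus_mult_def
    by (rule infsum_bounded_linear[OF bounded_linear_mscale_left torus_mult_summable[OF assms]])
  finally show "kernel_conv \<theta> (\<lambda>y. mscale (a y) M) (\<lambda>y. mscale (b y) N) z
      = mscale (torus_mult \<theta> a b z) (M ** N)" .
qed

lemma lmult_eq_kernel_op: "lmult \<theta> a xi = kernel_op \<theta> (\<lambda>y. mscale (a y) (mat 1)) xi"
  unfolding lmult_def kernel_op_def twist_def
  by (simp add: mscale_matrix_vector_mult vector_smult_assoc mult.commute)

lemma gamma_op_eq_kernel_op:
  "gamma_op \<theta> \<gamma> w xi = kernel_op \<theta> (\<lambda>y. mscale (fst w y) (cliff_prod \<gamma> (snd w))) xi"
  unfolding gamma_op_def lmult_def kernel_op_def twist_def spin_act_def
  by (simp add: mscale_matrix_vector_mult vector_smult_assoc mult.commute)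

end

subsection \<open>The Dirac operator and its commutators\<close>

definition dirac_const :: "'n set \<Rightarrow> complex" where
  "dirac_const K = \<i> powi (int (card K) - 1) * (2 * complex_of_real pi * \<i>)"

lemma dirac_const_nonzero: "dirac_const K \<noteq> 0"
  by (simp add: dirac_const_def)

lemma linear_basis_expansion:
  fixes \<gamma> :: "real^'n::finite \<Rightarrow> 'b::real_vector"
  assumes "linear \<gamma>"
  shows "\<gamma> v = (\<Sum>i\<in>UNIV. v $ i *\<^sub>R \<gamma> (axis i 1))"
proof -
  have "v = (\<Sum>i\<in>UNIV. v $ i *\<^sub>R axis i 1)"
    using basis_expansion[of v] by (simp add: scalar_mult_eq_scaleR)
  then have "\<gamma> v = \<gamma> (\<Sum>i\<in>UNIV. v $ i *\<^sub>R axis i 1)"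
    by simp
  also have "\<dots> = (\<Sum>i\<in>UNIV. v $ i *\<^sub>R \<gamma> (axis i 1))"
    using assms by (simp add: linear_sum linear_scale)
  finally show ?thesis .
qed

lemma Dirac_eq:
  fixes \<gamma> :: "real^'n::finite \<Rightarrow> complex^'s^'s"
  assumes "linear \<gamma>"
  shows "Dirac K \<gamma> xi = (\<lambda>x. dirac_const K *s (\<gamma> (rv x) *v xi x))"
proof
  fix x
  have "\<gamma> (rv x) *v xi x = (\<Sum>i\<in>UNIV. complex_of_int (x $ i) *s (\<gamma> (axis i 1) *v xi x))"
    by (subst linear_basis_expansion[OF assms])
       (simp add: sum_matrix_vector_mult scaleR_matrix_vector_mult rv_nth)
  then show "Dirac K \<gamma> xi x = dirac_const K *s (\<gamma> (rv x) *v xi x)"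
    unfolding Dirac_def dirac_const_def by (simp add: sum_cmul[symmetric] vector_smult_assoc mult_ac)
qed

lemma linear_norm_le_weight:
  fixes \<gamma> :: "real^'n::finite \<Rightarrow> complex^'s^'s"
  assumes "linear \<gamma>"
  obtains B where "0 \<le> B" "\<And>v. norm (\<gamma> v) \<le> B * (1 + norm v)"
proof -
  obtain B where B: "B > 0" "\<And>v. norm (\<gamma> v) \<le> norm v * B"
    using assms by (auto simp: linear_conv_bounded_linear dest: bounded_linear.pos_bounded)
  show ?thesis
  proof (rule that[of B])
    show "0 \<le> B"
      using B by simp
    fix v :: "real^'n"
    have "norm v * B \<le> B * (1 + norm v)"
      using B by (simp add: algebra_simps)
    then show "norm (\<gamma> v) \<le> B * (1 + norm v)"
      using B(2)[of v] by linarith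
  qed
qed

lemma rapid_gamma_mult_vector:
  fixes \<gamma> :: "real^'n::finite \<Rightarrow> complex^'s^'s"
  assumes "linear \<gamma>" "rapid xi"
  shows "rapid (\<lambda>w. c *s (\<gamma> (rv w) *v xi w))"
proof -
  obtain B where B: "0 \<le> B" "\<And>v. norm (\<gamma> v) \<le> B * (1 + norm v)"
    using linear_norm_le_weight[OF assms(1)] by blast
  show ?thesis
  proof (rule rapid_dominated_poly[OF assms(2), of "norm c * real CARD('s) ^ 2 * B" _ 1])
    fix w
    have "norm (c *s (\<gamma> (rv w) *v xi w)) \<le> norm c * (real CARD('s) ^ 2 * norm (\<gamma> (rv w)) * norm (xi w))"
      by (simp add: norm_vector_smult mult_left_mono norm_matrix_vector_mult_le)
    also have "\<dots> \<le> norm c * (real CARD('s) ^ 2 * (B * (1 + norm (rv w))) * norm (xi w))"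
      by (intro mult_left_mono mult_right_mono B) auto
    finally show "norm (c *s (\<gamma> (rv w) *v xi w)) \<le> norm c * real CARD('s) ^ 2 * B * (1 + norm (rv w)) ^ 1 * norm (xi w)"
      by (simp add: mult_ac)
  qed (use B in simp)
qed

lemma rapid_gamma_mult_matrix:
  fixes \<gamma> :: "real^'n::finite \<Rightarrow> complex^'s^'s"
  assumes "linear \<gamma>" "rapid X"
  shows "rapid (\<lambda>w. mscale c (\<gamma> (rv w) ** X w))"
proof -
  obtain B where B: "0 \<le> B" "\<And>v. norm (\<gamma> v) \<le> B * (1 + norm v)"
    using linear_norm_le_weight[OF assms(1)] by blast
  show ?thesis
  proof (rule rapid_dominated_poly[OF assms(2), of "norm c * real CARD('s) ^ 3 * B" _ 1])
    fix w
    have "norm (mscale c (\<gamma> (rv w) ** X w)) \<le> norm c * (real CARD('s) ^ 3 * norm (\<gamma> (rv w)) * norm (X w))"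
      by (simp add: norm_mscale mult_left_mono norm_matrix_mult_le)
    also have "\<dots> \<le> norm c * (real CARD('s) ^ 3 * (B * (1 + norm (rv w))) * norm (X w))"
      by (intro mult_left_mono mult_right_mono B) auto
    finally show "norm (mscale c (\<gamma> (rv w) ** X w)) \<le> norm c * real CARD('s) ^ 3 * B * (1 + norm (rv w)) ^ 1 * norm (X w)"
      by (simp add: mult_ac)
  qed (use B in simp)
qed

definition comm_kernel :: "'n set \<Rightarrow> (real^'n \<Rightarrow> complex^'s^'s) \<Rightarrow> (int^'n \<Rightarrow> complex) \<Rightarrow> int^'n \<Rightarrow> complex^'s^'s" where
  "comm_kernel K \<gamma> a = (\<lambda>y. mscale (dirac_const K * a y) (\<gamma> (rv y)))"

lemma rapid_comm_kernel:
  fixes \<gamma> :: "real^'n::finite \<Rightarrow> complex^'s^'s"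
  assumes "linear \<gamma>" "rapid a"
  shows "rapid (comm_kernel K \<gamma> a)"
proof -
  have "rapid (\<lambda>w. mscale (dirac_const K) (\<gamma> (rv w) ** mscale (a w) (mat 1)))"
    by (intro rapid_gamma_mult_matrix assms(1) rapid_dominated[OF assms(2), of "norm (mat 1 :: complex^'s^'s)"])
       (auto simp: norm_mscale mult.commute)
  then show ?thesis
    unfolding comm_kernel_def by (simp add: mscale_matrix_mult_right mscale_mscale)
qed

text \<open>In \<open>D (a \<xi>) - a (D \<xi>)\<close> the term indexed by \<open>y\<close> carries \<open>\<gamma>(x) - \<gamma>(x - y) = \<gamma>(y)\<close>.\<close>

lemma commD_eq_kernel_op:
  fixes \<gamma> :: "real^'n::finite \<Rightarrow> complex^'s^'s"
  assumes \<gamma>: "linear \<gamma>" and a: "rapid a" and xi: "rapid xi"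
  shows "commD \<theta> K \<gamma> a xi = kernel_op \<theta> (comm_kernel K \<gamma> a) xi"
proof
  fix x
  define c where "c = dirac_const K"
  define Dxi where "Dxi = (\<lambda>w. c *s (\<gamma> (rv w) *v xi w))"
  have aI: "rapid (\<lambda>y. mscale (a y) (mat 1 :: complex^'s^'s))"
    by (rule rapid_dominated[OF a, of "norm (mat 1 :: complex^'s^'s)"]) (auto simp: norm_mscale mult.commute)
  let ?f = "\<lambda>y. twist \<theta> y (x - y) *s (mscale (a y) (mat 1) *v xi (x - y))"
  let ?g = "\<lambda>y. twist \<theta> y (x - y) *s (mscale (a y) (mat 1) *v Dxi (x - y))"
  have f: "?f summable_on UNIV"
    by (rule kernel_op_summable[OF aI xi])
  have g: "?g summable_on UNIV"
    unfolding Dxi_def by (rule kernel_op_summable[OF aI rapid_gamma_mult_vector[OF \<gamma> xi]])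
  have bl: "bounded_linear (\<lambda>v. c *s (\<gamma> (rv x) *v v))"
    by (rule bounded_linear_compose[OF bounded_linear_vector_smult matrix_vector_mul_bounded_linear])
  have "commD \<theta> K \<gamma> a xi x = c *s (\<gamma> (rv x) *v infsum ?f UNIV) - infsum ?g UNIV"
    unfolding commD_def Dirac_eq[OF \<gamma>] lmult_eq_kernel_op by (simp add: kernel_op_def c_def Dxi_def)
  also have "\<dots> = (\<Sum>\<^sub>\<infinity>y. c *s (\<gamma> (rv x) *v ?f y) - ?g y)"
    by (simp add: infsum_bounded_linear[OF bl f] infsum_diff[OF summable_on_bounded_linear[OF bl f] g])
  also have "\<dots> = kernel_op \<theta> (comm_kernel K \<gamma> a) xi x"
    unfolding kernel_op_def
  proof (rule infsum_cong)
    fix y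
    have "c *s (\<gamma> (rv x) *v ?f y) - ?g y
        = (twist \<theta> y (x - y) * c * a y) *s ((\<gamma> (rv x) - \<gamma> (rv (x - y))) *v xi (x - y))"
      by (simp add: Dxi_def mscale_matrix_vector_mult vector_scalar_commute vector_smult_assoc
          vector_ssub_ldistrib matrix_vector_mult_diff_rdistrib mult_ac)
    also have "\<gamma> (rv x) - \<gamma> (rv (x - y)) = \<gamma> (rv y)"
      using \<gamma> by (simp add: linear_diff[symmetric] rv_diff)
    finally show "c *s (\<gamma> (rv x) *v ?f y) - ?g y = twist \<theta> y (x - y) *s (comm_kernel K \<gamma> a y *v xi (x - y))"
      by (simp add: comm_kernel_def mscale_matrix_vector_mult vector_smult_assoc c_def mult_ac)
  qed
  finally show "commD \<theta> K \<gamma> a xi x = kernel_op \<theta> (comm_kernel K \<gamma> a) xi x" .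
qed

subsection \<open>Clifford kernels\<close>

lemma cliff_prod_Nil [simp]: "cliff_prod \<gamma> [] = mat 1"
  and cliff_prod_Cons: "cliff_prod \<gamma> (v # vs) = \<gamma> v ** cliff_prod \<gamma> vs"
  by (simp_all add: cliff_prod_def)

lemma cliff_prod_append: "cliff_prod \<gamma> (xs @ ys) = cliff_prod \<gamma> xs ** cliff_prod \<gamma> ys"
  by (induction xs) (auto simp: cliff_prod_Cons matrix_mul_assoc)

definition clifford_kernel :: "(real^'n \<Rightarrow> complex^'s^'s) \<Rightarrow> ((int^'n \<Rightarrow> complex) \<times> (real^'n) list) list
    \<Rightarrow> int^'n \<Rightarrow> complex^'s^'s" where
  "clifford_kernel \<gamma> L = (\<lambda>y. \<Sum>w\<leftarrow>L. mscale (fst w y) (cliff_prod \<gamma> (snd w)))"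

definition clifford_kernels :: "(real^'n \<Rightarrow> complex^'s^'s) \<Rightarrow> nat \<Rightarrow> (int^'n \<Rightarrow> complex^'s^'s) set" where
  "clifford_kernels \<gamma> k = {clifford_kernel \<gamma> L | L. \<forall>w\<in>set L. fst w \<in> Atheta \<and> length (snd w) = k}"

lemma rapid_mscale: "rapid a \<Longrightarrow> rapid (\<lambda>y. mscale (a y) M)"
  by (rule rapid_dominated[of a "norm M"]) (auto simp: norm_mscale mult.commute)

lemma clifford_kernels_rapid: "X \<in> clifford_kernels \<gamma> k \<Longrightarrow> rapid X"
  unfolding clifford_kernels_def clifford_kernel_def Atheta_def
  by (auto intro!: rapid_sum_list rapid_mscale)

lemma clifford_kernels_zero: "(\<lambda>y. 0) \<in> clifford_kernels \<gamma> k"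
  unfolding clifford_kernels_def clifford_kernel_def by (rule CollectI, rule exI[of _ "[]"]) simp

lemma clifford_kernels_single:
  "a \<in> Atheta \<Longrightarrow> length vs = k \<Longrightarrow> (\<lambda>y. mscale (a y) (cliff_prod \<gamma> vs)) \<in> clifford_kernels \<gamma> k"
  unfolding clifford_kernels_def clifford_kernel_def by (rule CollectI, rule exI[of _ "[(a, vs)]"]) simp

lemma clifford_kernels_add:
  assumes "X \<in> clifford_kernels \<gamma> k" "Y \<in> clifford_kernels \<gamma> k"
  shows "(\<lambda>y. X y + Y y) \<in> clifford_kernels \<gamma> k"
proof -
  obtain L1 L2 where "X = clifford_kernel \<gamma> L1" "Y = clifford_kernel \<gamma> L2"
    "\<forall>w\<in>set L1. fst w \<in> Atheta \<and> length (snd w) = k" "\<forall>w\<in>set L2. fst w \<in> Atheta \<and> length (snd w) = k"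
    using assms unfolding clifford_kernels_def by blast
  then show ?thesis
    unfolding clifford_kernels_def
    by (intro CollectI exI[of _ "L1 @ L2"]) (auto simp: clifford_kernel_def)
qed

lemma clifford_kernels_sum_list:
  "(\<And>w. w \<in> set Ls \<Longrightarrow> f w \<in> clifford_kernels \<gamma> k) \<Longrightarrow> (\<lambda>y. \<Sum>w\<leftarrow>Ls. f w y) \<in> clifford_kernels \<gamma> k"
  by (induction Ls) (auto intro: clifford_kernels_zero clifford_kernels_add[of _ \<gamma> k, simplified])

lemma clifford_kernels_sum:
  "finite S \<Longrightarrow> (\<And>j. j \<in> S \<Longrightarrow> f j \<in> clifford_kernels \<gamma> k) \<Longrightarrow> (\<lambda>y. \<Sum>j\<in>S. f j y) \<in> clifford_kernels \<gamma> k"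
  by (induction S rule: finite_induct) (auto intro: clifford_kernels_zero clifford_kernels_add[of _ \<gamma> k, simplified])

lemma clifford_kernels_mult:
  assumes "X \<in> clifford_kernels \<gamma> k" "\<And>a. a \<in> Atheta \<Longrightarrow> (\<lambda>y. p y * a y) \<in> Atheta"
  shows "(\<lambda>y. mscale (p y) (X y)) \<in> clifford_kernels \<gamma> k"
proof -
  obtain L where L: "X = clifford_kernel \<gamma> L" "\<forall>w\<in>set L. fst w \<in> Atheta \<and> length (snd w) = k"
    using assms(1) unfolding clifford_kernels_def by blast
  have "(\<lambda>y. mscale (p y) (X y)) = clifford_kernel \<gamma> (map (\<lambda>w. (\<lambda>y. p y * fst w y, snd w)) L)"
    unfolding L(1) clifford_kernel_def by (simp add: mscale_sum_list_right mscale_mscale o_def)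
  then show ?thesis
    unfolding clifford_kernels_def using L(2) assms(2)
    by (intro CollectI exI[of _ "map (\<lambda>w. (\<lambda>y. p y * fst w y, snd w)) L"]) auto
qed

lemma clifford_kernels_scale: "X \<in> clifford_kernels \<gamma> k \<Longrightarrow> (\<lambda>y. mscale c (X y)) \<in> clifford_kernels \<gamma> k"
  using clifford_kernels_mult[of X \<gamma> k "\<lambda>_. c"] Atheta_scale by blast

lemma clifford_kernels_diff:
  assumes "X \<in> clifford_kernels \<gamma> k" "Y \<in> clifford_kernels \<gamma> k"
  shows "(\<lambda>y. X y - Y y) \<in> clifford_kernels \<gamma> k"
  using clifford_kernels_add[OF assms(1) clifford_kernels_scale[OF assms(2), of "-1"]]
  by (simp add: mscale_minus_left)

lemma clifford_kernels_kernel_conv: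
  assumes "X \<in> clifford_kernels \<gamma> k1" "Y \<in> clifford_kernels \<gamma> k2"
  shows "kernel_conv \<theta> X Y \<in> clifford_kernels \<gamma> (k1 + k2)"
proof -
  obtain L1 where L1: "X = clifford_kernel \<gamma> L1" "\<forall>w\<in>set L1. fst w \<in> Atheta \<and> length (snd w) = k1"
    using assms(1) unfolding clifford_kernels_def by blast
  obtain L2 where L2: "Y = clifford_kernel \<gamma> L2" "\<forall>w\<in>set L2. fst w \<in> Atheta \<and> length (snd w) = k2"
    using assms(2) unfolding clifford_kernels_def by blast
  let ?term = "\<lambda>w. \<lambda>y. mscale (fst w y) (cliff_prod \<gamma> (snd w))"
  have rapid_term: "rapid (?term w)" if "w \<in> set L1 \<union> set L2" for w
    using L1(2) L2(2) that by (auto simp: Atheta_def intro: rapid_mscale)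
  have "kernel_conv \<theta> X Y
      = (\<lambda>z. \<Sum>w1\<leftarrow>L1. \<Sum>w2\<leftarrow>L2. mscale (torus_mult \<theta> (fst w1) (fst w2) z) (cliff_prod \<gamma> (snd w1 @ snd w2)))"
  proof
    fix z
    have "kernel_conv \<theta> X Y z = (\<Sum>w1\<leftarrow>L1. kernel_conv \<theta> (?term w1) Y z)"
      unfolding L1(1) clifford_kernel_def
      by (rule kernel_conv_sum_list_left) (use rapid_term clifford_kernels_rapid[OF assms(2)] in auto)
    also have "\<dots> = (\<Sum>w1\<leftarrow>L1. \<Sum>w2\<leftarrow>L2. kernel_conv \<theta> (?term w1) (?term w2) z)"
      unfolding L2(1) clifford_kernel_def
      by (intro arg_cong[where f = sum_list] map_cong refl kernel_conv_sum_list_right) (use rapid_term in auto)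
    also have "\<dots> = (\<Sum>w1\<leftarrow>L1. \<Sum>w2\<leftarrow>L2. mscale (torus_mult \<theta> (fst w1) (fst w2) z) (cliff_prod \<gamma> (snd w1 @ snd w2)))"
      using L1(2) L2(2)
      by (intro arg_cong[where f = sum_list] map_cong refl)
         (simp add: kernel_conv_tensor Atheta_def cliff_prod_append)
    finally show "kernel_conv \<theta> X Y z
      = (\<Sum>w1\<leftarrow>L1. \<Sum>w2\<leftarrow>L2. mscale (torus_mult \<theta> (fst w1) (fst w2) z) (cliff_prod \<gamma> (snd w1 @ snd w2)))" .
  qed
  also have "\<dots> \<in> clifford_kernels \<gamma> (k1 + k2)"
    using L1(2) L2(2)
    by (intro clifford_kernels_sum_list clifford_kernels_single Atheta_torus_mult) auto
  finally show ?thesis .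
qed

definition polar :: "'n::finite set \<Rightarrow> real^'n \<Rightarrow> real^'n \<Rightarrow> real" where
  "polar K u v = qform K (u + v) - qform K u - qform K v"

definition qsign :: "'n set \<Rightarrow> 'n \<Rightarrow> real" where
  "qsign K i = (if i \<in> K then -1 else 1)"

lemma polar_eq_sum: "polar K u v = (\<Sum>i\<in>UNIV. 2 * qsign K i * u $ i * v $ i)"
  unfolding polar_def qform_def qsign_def
  by (simp add: sum_subtractf[symmetric] power2_sum algebra_simps)

definition comm_chain_kernel :: "(real^'n \<Rightarrow> real^'n \<Rightarrow> real) \<Rightarrow> 'n set \<Rightarrow> (real^'n \<Rightarrow> complex^'s^'s)
    \<Rightarrow> (int^'n \<Rightarrow> complex) list \<Rightarrow> int^'n \<Rightarrow> complex^'s^'s" where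
  "comm_chain_kernel \<theta> K \<gamma> as = foldr (\<lambda>a X. kernel_conv \<theta> (comm_kernel K \<gamma> a) X) as unit_kernel"

definition form_kernel :: "(real^'n \<Rightarrow> real^'n \<Rightarrow> real) \<Rightarrow> 'n set \<Rightarrow> (real^'n \<Rightarrow> complex^'s^'s)
    \<Rightarrow> (int^'n \<Rightarrow> complex) \<times> (int^'n \<Rightarrow> complex) list \<Rightarrow> int^'n \<Rightarrow> complex^'s^'s" where
  "form_kernel \<theta> K \<gamma> w = kernel_conv \<theta> (\<lambda>y. mscale (fst w y) (mat 1)) (comm_chain_kernel \<theta> K \<gamma> (snd w))"

definition dform_kernel :: "(real^'n \<Rightarrow> real^'n \<Rightarrow> real) \<Rightarrow> 'n set \<Rightarrow> (real^'n \<Rightarrow> complex^'s^'s)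
    \<Rightarrow> (int^'n \<Rightarrow> complex) \<times> (int^'n \<Rightarrow> complex) list \<Rightarrow> int^'n \<Rightarrow> complex^'s^'s" where
  "dform_kernel \<theta> K \<gamma> w = comm_chain_kernel \<theta> K \<gamma> (fst w # snd w)"

lemma comm_chain_kernel_Nil [simp]: "comm_chain_kernel \<theta> K \<gamma> [] = unit_kernel"
  and comm_chain_kernel_Cons:
    "comm_chain_kernel \<theta> K \<gamma> (a # as) = kernel_conv \<theta> (comm_kernel K \<gamma> a) (comm_chain_kernel \<theta> K \<gamma> as)"
  by (simp_all add: comm_chain_kernel_def)

locale nc_torus_dirac =
  fixes \<theta> :: "real^'n::finite \<Rightarrow> real^'n \<Rightarrow> real"
    and K :: "'n set"
    and \<gamma> :: "real^'n \<Rightarrow> complex^'s::finite^'s"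
  assumes bilinear_theta: "bilinear \<theta>"
    and linear_gamma: "linear \<gamma>"
    and gamma_square: "\<And>v. \<gamma> v ** \<gamma> v = mat (complex_of_real (qform K v))"
begin

lemma gamma_rv_diff: "\<gamma> (rv z) = \<gamma> (rv y) + \<gamma> (rv (z - y))"
  using linear_gamma by (simp add: rv_diff linear_add[symmetric])

lemma gamma_anticommute: "\<gamma> u ** \<gamma> v + \<gamma> v ** \<gamma> u = mat (complex_of_real (polar K u v))"
proof -
  have "\<gamma> (u + v) ** \<gamma> (u + v) = \<gamma> u ** \<gamma> u + (\<gamma> u ** \<gamma> v + \<gamma> v ** \<gamma> u) + \<gamma> v ** \<gamma> v"
    using linear_gamma by (simp add: linear_add matrix_add_ldistrib matrix_add_rdistrib' algebra_simps)
  then have "\<gamma> u ** \<gamma> v + \<gamma> v ** \<gamma> u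
      = mat (complex_of_real (qform K (u + v))) - mat (complex_of_real (qform K u)) - mat (complex_of_real (qform K v))"
    using gamma_square[of "u + v"] gamma_square[of u] gamma_square[of v] by (simp add: algebra_simps)
  then show ?thesis
    unfolding polar_def by (simp add: mat_diff')
qed

lemma comm_kernel_in_clifford_kernels: "a \<in> Atheta \<Longrightarrow> comm_kernel K \<gamma> a \<in> clifford_kernels \<gamma> 1"
proof -
  assume a: "a \<in> Atheta"
  have "comm_kernel K \<gamma> a
      = (\<lambda>y. \<Sum>i\<in>UNIV. mscale (dirac_const K * (complex_of_real (rv y $ i) * a y)) (cliff_prod \<gamma> [axis i 1]))"
    unfolding comm_kernel_def
    by (subst linear_basis_expansion[OF linear_gamma])
       (simp add: mscale_sum_right scaleR_eq_mscale mscale_mscale cliff_prod_Cons mult_ac)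
  also have "\<dots> \<in> clifford_kernels \<gamma> 1"
    by (intro clifford_kernels_sum clifford_kernels_single Atheta_scale Atheta_coordinate_mult a) simp_all
  finally show ?thesis .
qed

lemma rapid_comm_kernel': "a \<in> Atheta \<Longrightarrow> rapid (comm_kernel K \<gamma> a)"
  by (simp add: Atheta_def rapid_comm_kernel[OF linear_gamma])

lemma comm_chain_kernel_in_clifford_kernels:
  "set as \<subseteq> Atheta \<Longrightarrow> comm_chain_kernel \<theta> K \<gamma> as \<in> clifford_kernels \<gamma> (length as)"
proof (induction as)
  case Nil
  have "unit_kernel = (\<lambda>y. mscale (if y = 0 then 1 else 0) (cliff_prod \<gamma> []))"
    by (auto simp: unit_kernel_def fun_eq_iff)
  also have "\<dots> \<in> clifford_kernels \<gamma> 0"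
    by (rule clifford_kernels_single) (auto simp: Atheta_def intro: rapid_single_support)
  finally show ?case
    by simp
next
  case (Cons a as)
  then show ?case
    using clifford_kernels_kernel_conv[OF comm_kernel_in_clifford_kernels Cons.IH, of a \<theta>]
    by (simp add: comm_chain_kernel_Cons)
qed

lemma rapid_comm_chain_kernel: "set as \<subseteq> Atheta \<Longrightarrow> rapid (comm_chain_kernel \<theta> K \<gamma> as)"
  using comm_chain_kernel_in_clifford_kernels clifford_kernels_rapid by blast

lemma scalar_kernel_in_clifford_kernels: "a \<in> Atheta \<Longrightarrow> (\<lambda>y. mscale (a y) (mat 1)) \<in> clifford_kernels \<gamma> 0"
  using clifford_kernels_single[of a "[]" 0 \<gamma>] by simp

lemma form_kernel_in_clifford_kernels:
  "fst w \<in> Atheta \<Longrightarrow> set (snd w) \<subseteq> Atheta \<Longrightarrow> form_kernel \<theta> K \<gamma> w \<in> clifford_kernels \<gamma> (length (snd w))"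
  unfolding form_kernel_def
  using clifford_kernels_kernel_conv[OF scalar_kernel_in_clifford_kernels comm_chain_kernel_in_clifford_kernels]
  by simp

lemma commutators_eq_kernel_op:
  assumes "set as \<subseteq> Atheta" "xi \<in> Hdom"
  shows "foldr (\<lambda>a T. commD \<theta> K \<gamma> a \<circ> T) as id xi = kernel_op \<theta> (comm_chain_kernel \<theta> K \<gamma> as) xi"
  using assms(1)
proof (induction as)
  case Nil
  then show ?case
    by (simp add: kernel_op_unit_kernel[OF bilinear_theta])
next
  case (Cons a as)
  have a: "rapid a" and as: "set as \<subseteq> Atheta"
    using Cons.prems by (auto simp: Atheta_def)
  have xi: "rapid xi"
    using assms(2) by (simp add: Hdom_def)
  have "foldr (\<lambda>a T. commD \<theta> K \<gamma> a \<circ> T) (a # as) id xi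
      = commD \<theta> K \<gamma> a (foldr (\<lambda>a T. commD \<theta> K \<gamma> a \<circ> T) as id xi)"
    by simp
  also have "\<dots> = commD \<theta> K \<gamma> a (kernel_op \<theta> (comm_chain_kernel \<theta> K \<gamma> as) xi)"
    by (simp only: Cons.IH[OF as])
  also have "\<dots> = kernel_op \<theta> (comm_kernel K \<gamma> a) (kernel_op \<theta> (comm_chain_kernel \<theta> K \<gamma> as) xi)"
    by (rule commD_eq_kernel_op[OF linear_gamma a rapid_kernel_op[OF rapid_comm_chain_kernel[OF as] xi]])
  also have "\<dots> = kernel_op \<theta> (comm_chain_kernel \<theta> K \<gamma> (a # as)) xi"
    unfolding comm_chain_kernel_Cons
    by (rule kernel_op_kernel_op[OF bilinear_theta rapid_comm_kernel[OF linear_gamma a]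
          rapid_comm_chain_kernel[OF as] xi])
  finally show ?case .
qed

lemma pi_form_eq_kernel_op:
  assumes "fst w \<in> Atheta" "set (snd w) \<subseteq> Atheta" "xi \<in> Hdom"
  shows "pi_form \<theta> K \<gamma> w xi = kernel_op \<theta> (form_kernel \<theta> K \<gamma> w) xi"
proof -
  have "pi_form \<theta> K \<gamma> w xi = kernel_op \<theta> (\<lambda>y. mscale (fst w y) (mat 1)) (kernel_op \<theta> (comm_chain_kernel \<theta> K \<gamma> (snd w)) xi)"
    unfolding pi_form_def using commutators_eq_kernel_op[OF assms(2,3)] by (simp add: lmult_eq_kernel_op)
  also have "\<dots> = kernel_op \<theta> (form_kernel \<theta> K \<gamma> w) xi"
    unfolding form_kernel_def using assms
    by (intro kernel_op_kernel_op bilinear_theta rapid_mscale rapid_comm_chain_kernel)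
       (simp_all add: Atheta_def Hdom_def)
  finally show ?thesis .
qed

lemma pi_dform_eq_kernel_op:
  assumes "fst w \<in> Atheta" "set (snd w) \<subseteq> Atheta" "xi \<in> Hdom"
  shows "pi_dform \<theta> K \<gamma> w xi = kernel_op \<theta> (dform_kernel \<theta> K \<gamma> w) xi"
  unfolding pi_dform_def dform_kernel_def using commutators_eq_kernel_op[of "fst w # snd w" xi] assms
  by simp

end

subsection \<open>Junk forms\<close>

lemma rapid_coordinate_mscale: "rapid X \<Longrightarrow> rapid (\<lambda>w. mscale (complex_of_real (rv w $ i)) (X w))"
proof (rule rapid_dominated_poly[of X 1 _ 1])
  fix w
  have "\<bar>rv w $ i\<bar> \<le> 1 + norm (rv w)"
    using component_le_norm_cart[of "rv w" i] by linarith
  then show "norm (mscale (complex_of_real (rv w $ i)) (X w)) \<le> 1 * (1 + norm (rv w)) ^ 1 * norm (X w)"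
    by (simp add: norm_mscale mult_right_mono)
qed simp_all

context nc_torus_dirac
begin

lemma gamma_add_mult_gamma:
  "(\<gamma> v + \<gamma> u) ** (\<gamma> v ** Y)
    = mscale (complex_of_real (qform K v)) Y + mscale (complex_of_real (polar K u v)) Y - \<gamma> v ** (\<gamma> u ** Y)"
proof -
  have "\<gamma> u ** \<gamma> v = mat (complex_of_real (polar K u v)) - \<gamma> v ** \<gamma> u"
    using gamma_anticommute[of u v] by (simp add: eq_diff_eq)
  then show ?thesis
    by (simp add: matrix_add_rdistrib' matrix_diff_rdistrib' matrix_mul_assoc gamma_square mat_matrix_mult)
qed

lemma gamma_mult_comm_kernel:
  "\<gamma> (rv z) ** (comm_kernel K \<gamma> a y ** Y)
    = mscale (dirac_const K * a y * complex_of_real (qform K (rv y))) Y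
      + (\<Sum>i\<in>UNIV. mscale (complex_of_real (rv (z - y) $ i))
          (mscale (2 * complex_of_real (qsign K i) * dirac_const K * complex_of_real (rv y $ i) * a y) Y))
      - comm_kernel K \<gamma> a y ** (\<gamma> (rv (z - y)) ** Y)"
proof -
  define c where "c = dirac_const K * a y"
  have "(\<Sum>i\<in>UNIV. mscale (complex_of_real (rv (z - y) $ i))
          (mscale (2 * complex_of_real (qsign K i) * dirac_const K * complex_of_real (rv y $ i) * a y) Y))
      = mscale (\<Sum>i\<in>UNIV. c * complex_of_real (2 * qsign K i * rv (z - y) $ i * rv y $ i)) Y"
    by (simp add: mscale_sum_left mscale_mscale c_def mult_ac)
  also have "\<dots> = mscale (c * complex_of_real (polar K (rv (z - y)) (rv y))) Y"
    by (simp add: polar_eq_sum sum_distrib_left)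
  finally have polar_sum: "(\<Sum>i\<in>UNIV. mscale (complex_of_real (rv (z - y) $ i))
      (mscale (2 * complex_of_real (qsign K i) * dirac_const K * complex_of_real (rv y $ i) * a y) Y)) = mscale (c * complex_of_real (polar K (rv (z - y)) (rv y))) Y" .
  have "\<gamma> (rv z) ** (comm_kernel K \<gamma> a y ** Y) = mscale c ((\<gamma> (rv y) + \<gamma> (rv (z - y))) ** (\<gamma> (rv y) ** Y))"
    by (simp add: comm_kernel_def mscale_matrix_mult_left mscale_matrix_mult_right matrix_mul_assoc c_def
        flip: gamma_rv_diff)
  then show ?thesis
    unfolding gamma_add_mult_gamma polar_sum
    by (simp add: comm_kernel_def mscale_matrix_mult_left mscale_mscale mscale_add_right mscale_diff_right
        c_def mult_ac)
qed

lemma gamma_mult_kernel_conv_comm_kernel: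
  assumes a: "a \<in> Atheta" and Y: "rapid Y"
  defines "A \<equiv> \<lambda>y. mscale (dirac_const K * a y * complex_of_real (qform K (rv y))) (mat 1)"
    and "B \<equiv> \<lambda>i y. mscale (2 * complex_of_real (qsign K i) * dirac_const K * complex_of_real (rv y $ i) * a y) (mat 1)"
    and "Y' \<equiv> \<lambda>i w. mscale (complex_of_real (rv w $ i)) (Y w)"
  shows "\<gamma> (rv z) ** kernel_conv \<theta> (comm_kernel K \<gamma> a) Y z
    = kernel_conv \<theta> A Y z + (\<Sum>i\<in>UNIV. kernel_conv \<theta> (B i) (Y' i) z)
      - kernel_conv \<theta> (comm_kernel K \<gamma> a) (\<lambda>w. \<gamma> (rv w) ** Y w) z"
proof -
  have coordinate: "rapid (\<lambda>y. c * (complex_of_real (rv y $ i) * a y))" for c i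
    using Atheta_scale[OF Atheta_coordinate_mult[OF a]] by (simp add: Atheta_def)
  have rB: "rapid (B i)" for i
    unfolding B_def
    by (intro rapid_mscale) (use coordinate[of "2 * complex_of_real (qsign K i) * dirac_const K" i] in \<open>simp add: mult_ac\<close>)
  have rA: "rapid A"
    using Atheta_scale[OF Atheta_qform_mult[OF a, of K], of "dirac_const K"]
    unfolding A_def by (intro rapid_mscale) (simp add: Atheta_def mult_ac)
  have ra: "rapid (comm_kernel K \<gamma> a)"
    by (rule rapid_comm_kernel'[OF a])
  have rGY: "rapid (\<lambda>w. \<gamma> (rv w) ** Y w)"
    using rapid_gamma_mult_matrix[OF linear_gamma Y, of 1] by simp
  let ?f = "\<lambda>y. mscale (twist \<theta> y (z - y)) (comm_kernel K \<gamma> a y ** Y (z - y))"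
  let ?P1 = "\<lambda>y. mscale (twist \<theta> y (z - y)) (A y ** Y (z - y))"
  let ?P2 = "\<lambda>i y. mscale (twist \<theta> y (z - y)) (B i y ** Y' i (z - y))"
  let ?P3 = "\<lambda>y. mscale (twist \<theta> y (z - y)) (comm_kernel K \<gamma> a y ** (\<gamma> (rv (z - y)) ** Y (z - y)))"
  have s1: "?P1 summable_on UNIV"
    by (rule kernel_conv_summable[OF rA Y])
  have s2: "?P2 i summable_on UNIV" for i
    unfolding Y'_def by (rule kernel_conv_summable[OF rB rapid_coordinate_mscale[OF Y]])
  have s3: "?P3 summable_on UNIV"
    by (rule kernel_conv_summable[OF ra rGY])
  have "\<gamma> (rv z) ** kernel_conv \<theta> (comm_kernel K \<gamma> a) Y z = (\<Sum>\<^sub>\<infinity>y. \<gamma> (rv z) ** ?f y)"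
    unfolding kernel_conv_def
    by (rule infsum_bounded_linear[OF bounded_linear_matrix_mult_right kernel_conv_summable[OF ra Y], symmetric])
  also have "\<dots> = (\<Sum>\<^sub>\<infinity>y. ?P1 y + (\<Sum>i\<in>UNIV. ?P2 i y) - ?P3 y)"
    by (simp only: mscale_matrix_mult_right gamma_mult_comm_kernel A_def B_def Y'_def mscale_matrix_mult_left
        matrix_mul_lid mscale_add_right mscale_diff_right mscale_sum_right)
  also have "\<dots> = infsum ?P1 UNIV + (\<Sum>i\<in>UNIV. infsum (?P2 i) UNIV) - infsum ?P3 UNIV"
    using summable_on_finite_sum[of UNIV ?P2, OF finite_class.finite_UNIV s2]
    by (simp add: infsum_diff[OF summable_on_add[OF s1] s3] infsum_add[OF s1])
  finally show ?thesis
    unfolding kernel_conv_def .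
qed

lemma gamma_mult_comm_chain_kernel:
  "set as \<subseteq> Atheta \<Longrightarrow> as \<noteq> [] \<Longrightarrow>
    (\<lambda>z. \<gamma> (rv z) ** comm_chain_kernel \<theta> K \<gamma> as z) \<in> clifford_kernels \<gamma> (length as - 1)"
proof (induction as)
  case Nil
  then show ?case
    by simp
next
  case (Cons a as)
  have a: "a \<in> Atheta" and as: "set as \<subseteq> Atheta"
    using Cons.prems by auto
  define Y where "Y = comm_chain_kernel \<theta> K \<gamma> as"
  have Y: "Y \<in> clifford_kernels \<gamma> (length as)"
    unfolding Y_def by (rule comm_chain_kernel_in_clifford_kernels[OF as])
  have scalar: "(\<lambda>y. mscale (c * b y) (mat 1)) \<in> clifford_kernels \<gamma> 0" if "b \<in> Atheta" for b c
    by (intro scalar_kernel_in_clifford_kernels Atheta_scale that)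
  have "kernel_conv \<theta> (\<lambda>y. mscale (dirac_const K * a y * complex_of_real (qform K (rv y))) (mat 1)) Y
      \<in> clifford_kernels \<gamma> (length as)"
    using clifford_kernels_kernel_conv[OF scalar[OF Atheta_qform_mult[OF a]] Y]
    by (simp add: mult_ac)
  moreover have "kernel_conv \<theta>
        (\<lambda>y. mscale (2 * complex_of_real (qsign K i) * dirac_const K * complex_of_real (rv y $ i) * a y) (mat 1))
        (\<lambda>w. mscale (complex_of_real (rv w $ i)) (Y w)) \<in> clifford_kernels \<gamma> (length as)" for i
    using clifford_kernels_kernel_conv[OF scalar[OF Atheta_coordinate_mult[OF a],
          where c = "2 * complex_of_real (qsign K i) * dirac_const K"] clifford_kernels_mult[OF Y Atheta_coordinate_mult]]
    by (simp add: mult_ac)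
  then have "(\<lambda>z. \<Sum>i\<in>UNIV. kernel_conv \<theta>
        (\<lambda>y. mscale (2 * complex_of_real (qsign K i) * dirac_const K * complex_of_real (rv y $ i) * a y) (mat 1))
        (\<lambda>w. mscale (complex_of_real (rv w $ i)) (Y w)) z) \<in> clifford_kernels \<gamma> (length as)"
    by (intro clifford_kernels_sum) auto
  moreover have "kernel_conv \<theta> (comm_kernel K \<gamma> a) (\<lambda>w. \<gamma> (rv w) ** Y w) \<in> clifford_kernels \<gamma> (length as)"
  proof (cases "as = []")
    case True
    then have "(\<lambda>w. \<gamma> (rv w) ** Y w) = (\<lambda>w. 0)"
      using linear_0[OF linear_gamma] by (auto simp: Y_def unit_kernel_def fun_eq_iff)
    then show ?thesis
      by (simp add: kernel_conv_zero_right clifford_kernels_zero)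
  next
    case False
    then show ?thesis
      using clifford_kernels_kernel_conv[OF comm_kernel_in_clifford_kernels[OF a] Cons.IH[OF as False]]
      by (simp add: Y_def)
  qed
  ultimately show ?case
    unfolding comm_chain_kernel_Cons Y_def[symmetric]
    using gamma_mult_kernel_conv_comm_kernel[OF a clifford_kernels_rapid[OF Y]]
    by (auto intro!: clifford_kernels_diff clifford_kernels_add)
qed

text \<open>The kernel form of \<open>[D, a] X = D (a X) - a (D X)\<close>.\<close>

lemma kernel_conv_comm_kernel:
  assumes a: "a \<in> Atheta" and X: "rapid X"
  shows "kernel_conv \<theta> (comm_kernel K \<gamma> a) X z
    = mscale (dirac_const K) (\<gamma> (rv z) ** kernel_conv \<theta> (\<lambda>y. mscale (a y) (mat 1)) X z)
      - kernel_conv \<theta> (\<lambda>y. mscale (a y) (mat 1)) (\<lambda>w. mscale (dirac_const K) (\<gamma> (rv w) ** X w)) z"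
proof -
  define c where "c = dirac_const K"
  have aI: "rapid (\<lambda>y. mscale (a y) (mat 1 :: complex^'s^'s))"
    using a by (simp add: Atheta_def rapid_mscale)
  let ?f = "\<lambda>y. mscale (twist \<theta> y (z - y)) (mscale (a y) (mat 1) ** X (z - y))"
  let ?g = "\<lambda>y. mscale (twist \<theta> y (z - y)) (mscale (a y) (mat 1) ** mscale c (\<gamma> (rv (z - y)) ** X (z - y)))"
  have f: "?f summable_on UNIV"
    by (rule kernel_conv_summable[OF aI X])
  have g: "?g summable_on UNIV"
    by (rule kernel_conv_summable[OF aI rapid_gamma_mult_matrix[OF linear_gamma X]])
  have bl: "bounded_linear (\<lambda>M. mscale c (\<gamma> (rv z) ** M))"
    by (rule bounded_linear_compose[OF bounded_linear_mscale bounded_linear_matrix_mult_right])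
  have "mscale c (\<gamma> (rv z) ** kernel_conv \<theta> (\<lambda>y. mscale (a y) (mat 1)) X z)
        - kernel_conv \<theta> (\<lambda>y. mscale (a y) (mat 1)) (\<lambda>w. mscale c (\<gamma> (rv w) ** X w)) z
      = (\<Sum>\<^sub>\<infinity>y. mscale c (\<gamma> (rv z) ** ?f y) - ?g y)"
    unfolding kernel_conv_def
    by (simp add: infsum_bounded_linear[OF bl f] infsum_diff[OF summable_on_bounded_linear[OF bl f] g])
  also have "\<dots> = kernel_conv \<theta> (comm_kernel K \<gamma> a) X z"
    unfolding kernel_conv_def
  proof (rule infsum_cong)
    fix y
    have "mscale c (\<gamma> (rv z) ** ?f y) - ?g y
        = mscale (c * twist \<theta> y (z - y) * a y) ((\<gamma> (rv z) - \<gamma> (rv (z - y))) ** X (z - y))"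
      by (simp add: mscale_matrix_mult_left mscale_matrix_mult_right mscale_mscale matrix_diff_rdistrib'
          mscale_diff_right mult_ac)
    also have "\<gamma> (rv z) - \<gamma> (rv (z - y)) = \<gamma> (rv y)"
      using gamma_rv_diff[of z y] by simp
    finally show "mscale c (\<gamma> (rv z) ** ?f y) - ?g y = mscale (twist \<theta> y (z - y)) (comm_kernel K \<gamma> a y ** X (z - y))"
      by (simp add: comm_kernel_def mscale_matrix_mult_left mscale_mscale c_def mult_ac)
  qed
  finally show ?thesis
    unfolding c_def ..
qed

text \<open>If \<open>\<pi>(\<omega>) = 0\<close>, the first term of \<open>kernel_conv_comm_kernel\<close> drops out of the kernel of
  \<open>\<pi>(d\<omega>)\<close>, and multiplying by \<open>\<gamma>\<close> lowers the Clifford degree of the second term.\<close>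

lemma dform_kernel_sum_of_junk:
  assumes L: "\<forall>w\<in>set L. fst w \<in> Atheta \<and> set (snd w) \<subseteq> Atheta \<and> length (snd w) = Suc k"
    and junk: "(\<lambda>y. \<Sum>w\<leftarrow>L. form_kernel \<theta> K \<gamma> w y) = (\<lambda>y. 0)"
  shows "(\<lambda>y. \<Sum>w\<leftarrow>L. dform_kernel \<theta> K \<gamma> w y) \<in> clifford_kernels \<gamma> k"
proof -
  define DX where "DX w = (\<lambda>v. mscale (dirac_const K) (\<gamma> (rv v) ** comm_chain_kernel \<theta> K \<gamma> (snd w) v))"
    for w :: "(int^'n \<Rightarrow> complex) \<times> (int^'n \<Rightarrow> complex) list"
  define R where "R w = kernel_conv \<theta> (\<lambda>y. mscale (fst w y) (mat 1)) (DX w)" for w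
  have split: "dform_kernel \<theta> K \<gamma> w z = mscale (dirac_const K) (\<gamma> (rv z) ** form_kernel \<theta> K \<gamma> w z) - R w z"
    if "w \<in> set L" for w z
    using L that unfolding dform_kernel_def form_kernel_def R_def DX_def comm_chain_kernel_Cons
    by (intro kernel_conv_comm_kernel rapid_comm_chain_kernel) auto
  have "(\<lambda>z. \<Sum>w\<leftarrow>L. dform_kernel \<theta> K \<gamma> w z)
      = (\<lambda>z. mscale (dirac_const K) (\<gamma> (rv z) ** (\<Sum>w\<leftarrow>L. form_kernel \<theta> K \<gamma> w z)) - (\<Sum>w\<leftarrow>L. R w z))"
    using split
    by (simp add: fun_eq_iff map_cong[OF refl split] sum_list_subtractf matrix_mult_sum_list mscale_sum_list_right)
  also have "\<dots> = (\<lambda>z. - (\<Sum>w\<leftarrow>L. R w z))"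
    using junk by (simp add: fun_eq_iff)
  also have "\<dots> \<in> clifford_kernels \<gamma> k"
  proof -
    have "R w \<in> clifford_kernels \<gamma> k" if w: "w \<in> set L" for w
    proof -
      have "(\<lambda>v. \<gamma> (rv v) ** comm_chain_kernel \<theta> K \<gamma> (snd w) v) \<in> clifford_kernels \<gamma> (length (snd w) - 1)"
        using L w by (intro gamma_mult_comm_chain_kernel) auto
      then have "DX w \<in> clifford_kernels \<gamma> k"
        unfolding DX_def using clifford_kernels_scale[of _ \<gamma> _ "dirac_const K"] L w by force
      then show ?thesis
        unfolding R_def using L w clifford_kernels_kernel_conv[OF scalar_kernel_in_clifford_kernels] by force
    qed
    then show ?thesis
      using clifford_kernels_scale[OF clifford_kernels_sum_list, of L R \<gamma> k "-1"]
      by (simp add: mscale_minus_left)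
  qed
  finally show ?thesis .
qed

end

subsection \<open>Realising Clifford kernels by forms\<close>

definition point_mass :: "int^'n \<Rightarrow> int^'n \<Rightarrow> complex" where
  "point_mass y0 = (\<lambda>y. if y = y0 then 1 else 0)"

fun point_chain_coeff :: "(real^'n \<Rightarrow> real^'n \<Rightarrow> real) \<Rightarrow> 'n set \<Rightarrow> (int^'n) list \<Rightarrow> complex" where
  "point_chain_coeff \<theta> K [] = 1"
| "point_chain_coeff \<theta> K (y # ys) = dirac_const K * twist \<theta> y (sum_list ys) * point_chain_coeff \<theta> K ys"

text \<open>The coefficient \<open>a\<^sub>0\<close> for which \<open>a\<^sub>0 d(u(y\<^sub>1)) \<dots> d(u(y\<^sub>m))\<close> has kernel
  \<open>h \<otimes> \<gamma>(y\<^sub>1) \<cdots> \<gamma>(y\<^sub>m)\<close>.\<close>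

definition point_form_coeff :: "(real^'n \<Rightarrow> real^'n \<Rightarrow> real) \<Rightarrow> 'n set \<Rightarrow> (int^'n) list
    \<Rightarrow> (int^'n \<Rightarrow> complex) \<Rightarrow> int^'n \<Rightarrow> complex" where
  "point_form_coeff \<theta> K ys h =
    (\<lambda>w. inverse (twist \<theta> w (sum_list ys) * point_chain_coeff \<theta> K ys) * h (w + sum_list ys))"

lemma point_mass_Atheta: "point_mass y0 \<in> Atheta"
  unfolding Atheta_def point_mass_def by (auto intro: rapid_single_support)

lemma point_chain_coeff_nonzero: "point_chain_coeff \<theta> K ys \<noteq> 0"
  by (induction ys) (auto simp: dirac_const_nonzero)

lemma point_form_coeff_Atheta: "h \<in> Atheta \<Longrightarrow> point_form_coeff \<theta> K ys h \<in> Atheta"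
  unfolding point_form_coeff_def Atheta_def
  by (auto intro!: rapid_shift[where B = "inverse (norm (point_chain_coeff \<theta> K ys))"]
      simp: norm_mult norm_inverse)

context nc_torus_dirac
begin

lemma comm_chain_kernel_point_masses:
  "comm_chain_kernel \<theta> K \<gamma> (map point_mass ys)
    = (\<lambda>z. if z = sum_list ys then mscale (point_chain_coeff \<theta> K ys) (cliff_prod \<gamma> (map rv ys)) else 0)"
proof (induction ys)
  case Nil
  then show ?case
    by (auto simp: unit_kernel_def fun_eq_iff)
next
  case (Cons y ys)
  show ?case
  proof
    fix z
    have "comm_chain_kernel \<theta> K \<gamma> (map point_mass (y # ys)) z
        = mscale (twist \<theta> y (z - y)) (comm_kernel K \<gamma> (point_mass y) y ** comm_chain_kernel \<theta> K \<gamma> (map point_mass ys) (z - y))"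
      unfolding comm_chain_kernel_Cons list.map kernel_conv_def
      by (rule infsum_single_support) (simp add: comm_kernel_def point_mass_def)
    then show "comm_chain_kernel \<theta> K \<gamma> (map point_mass (y # ys)) z
        = (if z = sum_list (y # ys) then mscale (point_chain_coeff \<theta> K (y # ys)) (cliff_prod \<gamma> (map rv (y # ys))) else 0)"
      unfolding Cons.IH
      by (auto simp: comm_kernel_def point_mass_def cliff_prod_Cons mscale_matrix_mult_left
          mscale_matrix_mult_right mscale_mscale mult_ac algebra_simps)
  qed
qed

lemma kernel_conv_comm_chain_kernel_point_masses:
  "kernel_conv \<theta> X (comm_chain_kernel \<theta> K \<gamma> (map point_mass ys)) z
     = mscale (twist \<theta> (z - sum_list ys) (sum_list ys) * point_chain_coeff \<theta> K ys)
         (X (z - sum_list ys) ** cliff_prod \<gamma> (map rv ys))"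
proof -
  have "kernel_conv \<theta> X (comm_chain_kernel \<theta> K \<gamma> (map point_mass ys)) z
      = mscale (twist \<theta> (z - sum_list ys) (z - (z - sum_list ys)))
          (X (z - sum_list ys) ** comm_chain_kernel \<theta> K \<gamma> (map point_mass ys) (z - (z - sum_list ys)))"
    unfolding kernel_conv_def
    by (rule infsum_single_support) (auto simp: comm_chain_kernel_point_masses algebra_simps)
  then show ?thesis
    by (simp add: comm_chain_kernel_point_masses mscale_matrix_mult_right mscale_mscale)
qed

lemma form_kernel_point_masses:
  "form_kernel \<theta> K \<gamma> (point_form_coeff \<theta> K ys h, map point_mass ys)
    = (\<lambda>z. mscale (h z) (cliff_prod \<gamma> (map rv ys)))"
  using point_chain_coeff_nonzero[of \<theta> K ys]
  by (simp add: fun_eq_iff form_kernel_def kernel_conv_comm_chain_kernel_point_masses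
      mscale_matrix_mult_left mscale_mscale point_form_coeff_def field_simps)

lemma dform_kernel_point_masses:
  "dform_kernel \<theta> K \<gamma> (point_form_coeff \<theta> K ys h, map point_mass ys)
    = (\<lambda>z. mscale (dirac_const K * h z) (\<gamma> (rv (z - sum_list ys)) ** cliff_prod \<gamma> (map rv ys)))"
  using point_chain_coeff_nonzero[of \<theta> K ys]
  by (simp add: fun_eq_iff dform_kernel_def comm_chain_kernel_Cons kernel_conv_comm_chain_kernel_point_masses
      comm_kernel_def mscale_matrix_mult_left mscale_mscale point_form_coeff_def field_simps)

end

definition lattice_clifford_span :: "(real^'n \<Rightarrow> complex^'s^'s) \<Rightarrow> nat \<Rightarrow> (complex^'s^'s) set" where
  "lattice_clifford_span \<gamma> m = {\<Sum>e\<leftarrow>E. mscale (fst e) (cliff_prod \<gamma> (map rv (snd e))) | E :: (complex \<times> (int^'n) list) list.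
      \<forall>e\<in>set E. length (snd e) = m}"

lemma lattice_clifford_span_zero: "0 \<in> lattice_clifford_span \<gamma> m"
  unfolding lattice_clifford_span_def by (intro CollectI exI[of _ "[]"]) simp

lemma lattice_clifford_span_add:
  fixes \<gamma> :: "real^'n::finite \<Rightarrow> complex^'s^'s"
  assumes "A \<in> lattice_clifford_span \<gamma> m" "B \<in> lattice_clifford_span \<gamma> m"
  shows "A + B \<in> lattice_clifford_span \<gamma> m"
proof -
  obtain E1 E2 :: "(complex \<times> (int^'n) list) list" where
    "A = (\<Sum>e\<leftarrow>E1. mscale (fst e) (cliff_prod \<gamma> (map rv (snd e))))" "\<forall>e\<in>set E1. length (snd e) = m"
    "B = (\<Sum>e\<leftarrow>E2. mscale (fst e) (cliff_prod \<gamma> (map rv (snd e))))" "\<forall>e\<in>set E2. length (snd e) = m"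
    using assms unfolding lattice_clifford_span_def by blast
  then show ?thesis
    unfolding lattice_clifford_span_def by (intro CollectI exI[of _ "E1 @ E2"]) auto
qed

lemma lattice_clifford_span_sum:
  "finite S \<Longrightarrow> (\<And>i. i \<in> S \<Longrightarrow> f i \<in> lattice_clifford_span \<gamma> m) \<Longrightarrow> sum f S \<in> lattice_clifford_span \<gamma> m"
  by (induction S rule: finite_induct) (auto intro: lattice_clifford_span_zero lattice_clifford_span_add)

lemma lattice_clifford_span_mscale_axis:
  fixes \<gamma> :: "real^'n::finite \<Rightarrow> complex^'s^'s"
  assumes "A \<in> lattice_clifford_span \<gamma> m"
  shows "mscale c (\<gamma> (axis i 1) ** A) \<in> lattice_clifford_span \<gamma> (Suc m)"
proof -
  obtain E :: "(complex \<times> (int^'n) list) list" where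
    E: "A = (\<Sum>e\<leftarrow>E. mscale (fst e) (cliff_prod \<gamma> (map rv (snd e))))" "\<forall>e\<in>set E. length (snd e) = m"
    using assms unfolding lattice_clifford_span_def by blast
  have "mscale c (\<gamma> (axis i 1) ** A)
      = (\<Sum>e\<leftarrow>map (\<lambda>e. (c * fst e, axis i 1 # snd e)) E. mscale (fst e) (cliff_prod \<gamma> (map rv (snd e))))"
    by (simp add: E(1) matrix_mult_sum_list mscale_sum_list_right o_def mscale_matrix_mult_right
        mscale_mscale cliff_prod_Cons rv_axis)
  then show ?thesis
    unfolding lattice_clifford_span_def using E(2) by fastforce
qed

context nc_torus_dirac
begin

lemma cliff_prod_in_lattice_clifford_span: "cliff_prod \<gamma> vs \<in> lattice_clifford_span \<gamma> (length vs)"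
proof (induction vs)
  case Nil
  show ?case
    unfolding lattice_clifford_span_def by (intro CollectI exI[of _ "[(1, [])]"]) simp
next
  case (Cons v vs)
  have "cliff_prod \<gamma> (v # vs) = (\<Sum>i\<in>UNIV. mscale (complex_of_real (v $ i)) (\<gamma> (axis i 1) ** cliff_prod \<gamma> vs))"
    unfolding cliff_prod_Cons
    by (subst linear_basis_expansion[OF linear_gamma, of v])
       (simp add: sum_matrix_mult scaleR_eq_mscale mscale_matrix_mult_left)
  also have "\<dots> \<in> lattice_clifford_span \<gamma> (length (v # vs))"
    using Cons.IH by (auto intro: lattice_clifford_span_sum lattice_clifford_span_mscale_axis)
  finally show ?case .
qed

lemma clifford_kernels_subset:
  assumes zero: "(\<lambda>y. 0) \<in> Q" and add: "\<And>X Y. X \<in> Q \<Longrightarrow> Y \<in> Q \<Longrightarrow> (\<lambda>y. X y + Y y) \<in> Q"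
    and lattice: "\<And>g ys. g \<in> Atheta \<Longrightarrow> length ys = k \<Longrightarrow> (\<lambda>z. mscale (g z) (cliff_prod \<gamma> (map rv ys))) \<in> Q"
  shows "clifford_kernels \<gamma> k \<subseteq> Q"
proof
  have sum_list: "(\<And>w. w \<in> set Ls \<Longrightarrow> f w \<in> Q) \<Longrightarrow> (\<lambda>y. \<Sum>w\<leftarrow>Ls. f w y) \<in> Q"
    for Ls and f :: "'w \<Rightarrow> int^'n \<Rightarrow> complex^'s^'s"
    by (induction Ls) (auto intro: zero add[of _ _, simplified])
  fix X
  assume "X \<in> clifford_kernels \<gamma> k"
  then obtain L where L: "X = clifford_kernel \<gamma> L" "\<forall>w\<in>set L. fst w \<in> Atheta \<and> length (snd w) = k"
    unfolding clifford_kernels_def by blast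
  have "(\<lambda>y. mscale (fst w y) (cliff_prod \<gamma> (snd w))) \<in> Q" if w: "w \<in> set L" for w
  proof -
    obtain E :: "(complex \<times> (int^'n) list) list" where
      E: "cliff_prod \<gamma> (snd w) = (\<Sum>e\<leftarrow>E. mscale (fst e) (cliff_prod \<gamma> (map rv (snd e))))"
        "\<forall>e\<in>set E. length (snd e) = k"
      using cliff_prod_in_lattice_clifford_span[of "snd w"] L(2) w unfolding lattice_clifford_span_def by auto
    have "(\<lambda>y. mscale (fst w y) (cliff_prod \<gamma> (snd w)))
        = (\<lambda>y. \<Sum>e\<leftarrow>E. mscale (fst e * fst w y) (cliff_prod \<gamma> (map rv (snd e))))"
      by (simp add: E(1) mscale_sum_list_right mscale_mscale mult_ac)
    also have "\<dots> \<in> Q"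
      using Atheta_scale L(2) w E(2) by (intro sum_list lattice) auto
    finally show ?thesis .
  qed
  then show "X \<in> Q"
    unfolding L(1) clifford_kernel_def by (rule sum_list)
qed

lemma form_kernel_sums_eq_clifford_kernels:
  "{(\<lambda>y. \<Sum>w\<leftarrow>L. form_kernel \<theta> K \<gamma> w y) | L.
      \<forall>w\<in>set L. fst w \<in> Atheta \<and> set (snd w) \<subseteq> Atheta \<and> length (snd w) = m}
    = clifford_kernels \<gamma> m"
  (is "?Q = _")
proof
  show "?Q \<subseteq> clifford_kernels \<gamma> m"
    using form_kernel_in_clifford_kernels by (force intro: clifford_kernels_sum_list)
  show "clifford_kernels \<gamma> m \<subseteq> ?Q"
  proof (rule clifford_kernels_subset)
    show "(\<lambda>y. 0) \<in> ?Q"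
      by (intro CollectI exI[of _ "[]"]) simp
    show "(\<lambda>y. X y + Y y) \<in> ?Q" if X: "X \<in> ?Q" and Y: "Y \<in> ?Q" for X Y
    proof -
      obtain L1 L2 where
        "X = (\<lambda>y. \<Sum>w\<leftarrow>L1. form_kernel \<theta> K \<gamma> w y)" "\<forall>w\<in>set L1. fst w \<in> Atheta \<and> set (snd w) \<subseteq> Atheta \<and> length (snd w) = m"
        "Y = (\<lambda>y. \<Sum>w\<leftarrow>L2. form_kernel \<theta> K \<gamma> w y)" "\<forall>w\<in>set L2. fst w \<in> Atheta \<and> set (snd w) \<subseteq> Atheta \<and> length (snd w) = m"
        using X Y by blast
      then show ?thesis
        by (intro CollectI exI[of _ "L1 @ L2"]) auto
    qed
    show "(\<lambda>z. mscale (g z) (cliff_prod \<gamma> (map rv ys))) \<in> ?Q" if "g \<in> Atheta" "length ys = m" for g ys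
      using that form_kernel_point_masses[of ys g]
      by (intro CollectI exI[of _ "[(point_form_coeff \<theta> K ys g, map point_mass ys)]"])
         (simp add: point_form_coeff_Atheta point_mass_Atheta image_subset_iff)
  qed
qed

end

lemma qform_axis: "qform K (axis i 1 :: real^'n::finite) = (if i \<in> K then -1 else 1)"
proof -
  have "qform K (axis i 1 :: real^'n) = (\<Sum>j\<in>UNIV. if j = i then (if i \<in> K then -1 else 1) else 0)"
    unfolding qform_def by (rule sum.cong) (auto simp: axis_def)
  then show ?thesis
    by simp
qed

lemma matrix_mult_shifted_diff:
  assumes "G ** G = mat q"
  shows "W ** (G ** C) + (W + G + G) ** (- (G ** C)) = mscale (- 2 * q) (C :: complex^'s^'s)"
proof -
  have "W ** (G ** C) + (W + G + G) ** (- (G ** C)) = - (G ** (G ** C) + G ** (G ** C))"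
    by (simp only: matrix_neg_right' matrix_add_rdistrib' minus_add_distrib add.assoc[symmetric] add.right_inverse
        add_0_left)
  also have "G ** (G ** C) = mscale q C"
    by (simp only: matrix_mul_assoc assms mat_matrix_mult)
  finally show ?thesis
    by (simp add: vec_eq_iff algebra_simps)
qed

context nc_torus_dirac
begin

lemma form_kernel_point_masses_antipodal:
  "(\<lambda>z. form_kernel \<theta> K \<gamma> (point_form_coeff \<theta> K (e # ys) h, map point_mass (e # ys)) z
      + form_kernel \<theta> K \<gamma> (point_form_coeff \<theta> K (- e # ys) h, map point_mass (- e # ys)) z) = (\<lambda>z. 0)"
  using form_kernel_point_masses[of "e # ys" h] form_kernel_point_masses[of "- e # ys" h]
    linear_neg[OF linear_gamma, of "rv e"]
  by (simp add: cliff_prod_Cons rv_minus matrix_neg_left' mscale_minus_right)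

lemma dform_kernel_point_masses_antipodal:
  "dform_kernel \<theta> K \<gamma> (point_form_coeff \<theta> K (e # ys) h, map point_mass (e # ys)) z
    + dform_kernel \<theta> K \<gamma> (point_form_coeff \<theta> K (- e # ys) h, map point_mass (- e # ys)) z
    = mscale (dirac_const K * h z * (- 2 * complex_of_real (qform K (rv e)))) (cliff_prod \<gamma> (map rv ys))"
proof -
  define G where "G = \<gamma> (rv e)"
  define W where "W = \<gamma> (rv (z - (e + sum_list ys)))"
  define C where "C = cliff_prod \<gamma> (map rv ys)"
  have neg: "\<gamma> (rv (- e)) = - G"
    using linear_neg[OF linear_gamma] by (simp add: G_def rv_minus)
  have "z - (- e + sum_list ys) = (z - (e + sum_list ys)) + e + e"
    by (simp add: algebra_simps)
  then have shift: "\<gamma> (rv (z - (- e + sum_list ys))) = W + G + G"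
    unfolding G_def W_def by (simp only: rv_add linear_add[OF linear_gamma])
  have "dform_kernel \<theta> K \<gamma> (point_form_coeff \<theta> K (e # ys) h, map point_mass (e # ys)) z
      = mscale (dirac_const K * h z) (W ** (G ** C))"
    unfolding dform_kernel_point_masses by (simp only: sum_list.Cons list.map cliff_prod_Cons G_def W_def C_def)
  moreover have "dform_kernel \<theta> K \<gamma> (point_form_coeff \<theta> K (- e # ys) h, map point_mass (- e # ys)) z
      = mscale (dirac_const K * h z) ((W + G + G) ** (- (G ** C)))"
    unfolding dform_kernel_point_masses by (simp only: sum_list.Cons list.map cliff_prod_Cons neg shift matrix_neg_left' C_def)
  moreover have "G ** G = mat (complex_of_real (qform K (rv e)))"
    by (simp add: G_def gamma_square)
  ultimately show ?thesis
    by (simp only: mscale_add_right[symmetric] matrix_mult_shifted_diff mscale_mscale C_def)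
qed

text \<open>The two forms \<open>a\<^sub>0 d(u(\<plusminus>e)) d(u(y\<^sub>1)) \<dots> d(u(y\<^sub>k))\<close> have opposite kernels, while their
  differentials differ by \<open>\<gamma>(e)\<^sup>2 = q(e) \<noteq> 0\<close>.\<close>

lemma junk_form_point_masses:
  assumes g: "g \<in> Atheta" and ys: "length ys = k"
  obtains L where "\<forall>w\<in>set L. fst w \<in> Atheta \<and> set (snd w) \<subseteq> Atheta \<and> length (snd w) = Suc k"
    and "(\<lambda>y. \<Sum>w\<leftarrow>L. form_kernel \<theta> K \<gamma> w y) = (\<lambda>y. 0)"
    and "(\<lambda>y. \<Sum>w\<leftarrow>L. dform_kernel \<theta> K \<gamma> w y) = (\<lambda>z. mscale (g z) (cliff_prod \<gamma> (map rv ys)))"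
proof -
  define e :: "int^'n" where "e = axis undefined 1"
  define q where "q = qform K (rv e)"
  define h where "h = (\<lambda>z. inverse (- 2 * dirac_const K * complex_of_real q) * g z)"
  define L where "L = [(point_form_coeff \<theta> K (e # ys) h, map point_mass (e # ys)),
                       (point_form_coeff \<theta> K (- e # ys) h, map point_mass (- e # ys))]"
  have sum_L: "(\<lambda>y. \<Sum>w\<leftarrow>L. f w y)
      = (\<lambda>y. f (point_form_coeff \<theta> K (e # ys) h, map point_mass (e # ys)) y
           + f (point_form_coeff \<theta> K (- e # ys) h, map point_mass (- e # ys)) y)"
    for f :: "_ \<Rightarrow> int^'n \<Rightarrow> complex^'s^'s"
    by (simp add: L_def)
  have h: "h \<in> Atheta"
    unfolding h_def by (rule Atheta_scale[OF g])
  have "q \<noteq> 0"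
    by (simp add: q_def e_def rv_axis qform_axis)
  then have "dirac_const K * h z * (- 2 * complex_of_real q) = g z" for z
    using dirac_const_nonzero[of K] by (simp add: h_def field_simps)
  then have "(\<lambda>y. \<Sum>w\<leftarrow>L. dform_kernel \<theta> K \<gamma> w y) = (\<lambda>z. mscale (g z) (cliff_prod \<gamma> (map rv ys)))"
    unfolding sum_L dform_kernel_point_masses_antipodal q_def by simp
  moreover have "(\<lambda>y. \<Sum>w\<leftarrow>L. form_kernel \<theta> K \<gamma> w y) = (\<lambda>y. 0)"
    unfolding sum_L by (rule form_kernel_point_masses_antipodal)
  moreover have "\<forall>w\<in>set L. fst w \<in> Atheta \<and> set (snd w) \<subseteq> Atheta \<and> length (snd w) = Suc k"
    using h ys by (auto simp: L_def point_form_coeff_Atheta point_mass_Atheta)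
  ultimately show ?thesis
    using that by blast
qed

lemma dform_kernel_sums_of_junk_eq_clifford_kernels:
  "{(\<lambda>y. \<Sum>w\<leftarrow>L. dform_kernel \<theta> K \<gamma> w y) | L.
      (\<forall>w\<in>set L. fst w \<in> Atheta \<and> set (snd w) \<subseteq> Atheta \<and> length (snd w) = Suc k)
      \<and> (\<lambda>y. \<Sum>w\<leftarrow>L. form_kernel \<theta> K \<gamma> w y) = (\<lambda>y. 0)}
    = clifford_kernels \<gamma> k"
  (is "?Q = _")
proof
  show "?Q \<subseteq> clifford_kernels \<gamma> k"
  proof
    fix X
    assume "X \<in> ?Q"
    then obtain L where "X = (\<lambda>y. \<Sum>w\<leftarrow>L. dform_kernel \<theta> K \<gamma> w y)"
      "\<forall>w\<in>set L. fst w \<in> Atheta \<and> set (snd w) \<subseteq> Atheta \<and> length (snd w) = Suc k"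
      "(\<lambda>y. \<Sum>w\<leftarrow>L. form_kernel \<theta> K \<gamma> w y) = (\<lambda>y. 0)"
      by blast
    then show "X \<in> clifford_kernels \<gamma> k"
      using dform_kernel_sum_of_junk by simp
  qed
  show "clifford_kernels \<gamma> k \<subseteq> ?Q"
  proof (rule clifford_kernels_subset)
    show "(\<lambda>y. 0) \<in> ?Q"
      by (intro CollectI exI[of _ "[]"]) simp
    show "(\<lambda>y. X y + Y y) \<in> ?Q" if X: "X \<in> ?Q" and Y: "Y \<in> ?Q" for X Y
    proof -
      obtain L1 where L1: "X = (\<lambda>y. \<Sum>w\<leftarrow>L1. dform_kernel \<theta> K \<gamma> w y)"
        "\<forall>w\<in>set L1. fst w \<in> Atheta \<and> set (snd w) \<subseteq> Atheta \<and> length (snd w) = Suc k"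
        "(\<lambda>y. \<Sum>w\<leftarrow>L1. form_kernel \<theta> K \<gamma> w y) = (\<lambda>y. 0)"
        using X by blast
      obtain L2 where L2: "Y = (\<lambda>y. \<Sum>w\<leftarrow>L2. dform_kernel \<theta> K \<gamma> w y)"
        "\<forall>w\<in>set L2. fst w \<in> Atheta \<and> set (snd w) \<subseteq> Atheta \<and> length (snd w) = Suc k"
        "(\<lambda>y. \<Sum>w\<leftarrow>L2. form_kernel \<theta> K \<gamma> w y) = (\<lambda>y. 0)"
        using Y by blast
      show ?thesis
        using L1 L2 by (intro CollectI exI[of _ "L1 @ L2"]) (simp add: fun_eq_iff ball_Un)
    qed
    show "(\<lambda>z. mscale (g z) (cliff_prod \<gamma> (map rv ys))) \<in> ?Q" if g: "g \<in> Atheta" and ys: "length ys = k" for g ys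
    proof -
      obtain L where "\<forall>w\<in>set L. fst w \<in> Atheta \<and> set (snd w) \<subseteq> Atheta \<and> length (snd w) = Suc k"
        "(\<lambda>y. \<Sum>w\<leftarrow>L. form_kernel \<theta> K \<gamma> w y) = (\<lambda>y. 0)"
        "(\<lambda>y. \<Sum>w\<leftarrow>L. dform_kernel \<theta> K \<gamma> w y) = (\<lambda>z. mscale (g z) (cliff_prod \<gamma> (map rv ys)))"
        using junk_form_point_masses[OF g ys] .
      then show ?thesis
        by (intro CollectI exI[of _ L]) simp
    qed
  qed
qed

end

lemma restrict_opsum_eq_kernel_op:
  fixes X :: "'w \<Rightarrow> int^'n::finite \<Rightarrow> complex^'s^'s"
  assumes "\<And>w xi. w \<in> set L \<Longrightarrow> xi \<in> Hdom \<Longrightarrow> F w xi = kernel_op \<theta> (X w) xi"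
    and "\<And>w. w \<in> set L \<Longrightarrow> rapid (X w)"
  shows "restrict (opsum F L) Hdom = restrict (kernel_op \<theta> (\<lambda>y. \<Sum>w\<leftarrow>L. X w y)) Hdom"
proof (rule restrict_ext)
  fix xi :: "int^'n \<Rightarrow> complex^'s"
  assume xi: "xi \<in> Hdom"
  then have "rapid xi"
    by (simp add: Hdom_def)
  have "opsum F L xi = (\<lambda>x. \<Sum>w\<leftarrow>L. kernel_op \<theta> (X w) xi x)"
    unfolding opsum_def using assms(1)[OF _ xi] by (intro ext arg_cong[where f = sum_list] map_cong) auto
  also have "\<dots> = kernel_op \<theta> (\<lambda>y. \<Sum>w\<leftarrow>L. X w y) xi"
    by (rule kernel_op_sum_list[symmetric]) (use assms(2) \<open>rapid xi\<close> in auto)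
  finally show "opsum F L xi = kernel_op \<theta> (\<lambda>y. \<Sum>w\<leftarrow>L. X w y) xi" .
qed

lemma restrict_opsum_sets_eq:
  assumes "\<And>L. P L \<Longrightarrow> restrict (opsum F L) Hdom = restrict (kernel_op \<theta> (X L)) Hdom"
    and "\<And>L. Q L \<Longrightarrow> restrict (opsum G L) Hdom = restrict (kernel_op \<theta> (Y L)) Hdom"
    and "{X L | L. P L} = {Y L | L. Q L}"
  shows "{restrict (opsum F L) Hdom | L. P L} = {restrict (opsum G L) Hdom | L. Q L}"
proof -
  have "{restrict (opsum F L) Hdom | L. P L} = {restrict (kernel_op \<theta> Z) Hdom | Z. Z \<in> {X L | L. P L}}"
    using assms(1) by auto metis
  also have "\<dots> = {restrict (kernel_op \<theta> Z) Hdom | Z. Z \<in> {Y L | L. Q L}}"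
    by (simp only: assms(3))
  also have "\<dots> = {restrict (opsum G L) Hdom | L. Q L}"
    using assms(2) by auto metis
  finally show ?thesis .
qed

context nc_torus_dirac
begin

lemma restrict_opsum_pi_form:
  assumes "\<forall>w\<in>set L. fst w \<in> Atheta \<and> set (snd w) \<subseteq> Atheta"
  shows "restrict (opsum (pi_form \<theta> K \<gamma>) L) Hdom
    = restrict (kernel_op \<theta> (\<lambda>y. \<Sum>w\<leftarrow>L. form_kernel \<theta> K \<gamma> w y)) Hdom"
proof (rule restrict_opsum_eq_kernel_op)
  show "pi_form \<theta> K \<gamma> w xi = kernel_op \<theta> (form_kernel \<theta> K \<gamma> w) xi" if "w \<in> set L" "xi \<in> Hdom" for w xi
    using assms that by (intro pi_form_eq_kernel_op) auto
  show "rapid (form_kernel \<theta> K \<gamma> w)" if "w \<in> set L" for w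
    using assms that by (intro clifford_kernels_rapid[OF form_kernel_in_clifford_kernels]) auto
qed

lemma restrict_opsum_pi_dform:
  assumes "\<forall>w\<in>set L. fst w \<in> Atheta \<and> set (snd w) \<subseteq> Atheta"
  shows "restrict (opsum (pi_dform \<theta> K \<gamma>) L) Hdom
    = restrict (kernel_op \<theta> (\<lambda>y. \<Sum>w\<leftarrow>L. dform_kernel \<theta> K \<gamma> w y)) Hdom"
proof (rule restrict_opsum_eq_kernel_op)
  show "pi_dform \<theta> K \<gamma> w xi = kernel_op \<theta> (dform_kernel \<theta> K \<gamma> w) xi" if "w \<in> set L" "xi \<in> Hdom" for w xi
    using assms that by (intro pi_dform_eq_kernel_op) auto
  show "rapid (dform_kernel \<theta> K \<gamma> w)" if "w \<in> set L" for w
    using assms that unfolding dform_kernel_def by (intro rapid_comm_chain_kernel) auto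
qed

lemma restrict_opsum_gamma_op:
  assumes "\<forall>w\<in>set L. fst w \<in> Atheta"
  shows "restrict (opsum (gamma_op \<theta> \<gamma>) L) Hdom = restrict (kernel_op \<theta> (clifford_kernel \<gamma> L)) Hdom"
  unfolding clifford_kernel_def
proof (rule restrict_opsum_eq_kernel_op)
  show "rapid (\<lambda>y. mscale (fst w y) (cliff_prod \<gamma> (snd w)))" if "w \<in> set L" for w
    using assms that by (intro rapid_mscale) (auto simp: Atheta_def)
qed (rule gamma_op_eq_kernel_op)

lemma opsum_pi_form_vanishes_iff:
  assumes "\<forall>w\<in>set L. fst w \<in> Atheta \<and> set (snd w) \<subseteq> Atheta"
  shows "(\<forall>xi\<in>Hdom. opsum (pi_form \<theta> K \<gamma>) L xi = (\<lambda>x. 0)) \<longleftrightarrow> (\<lambda>y. \<Sum>w\<leftarrow>L. form_kernel \<theta> K \<gamma> w y) = (\<lambda>y. 0)"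
proof -
  have op: "opsum (pi_form \<theta> K \<gamma>) L xi = kernel_op \<theta> (\<lambda>y. \<Sum>w\<leftarrow>L. form_kernel \<theta> K \<gamma> w y) xi"
    if "xi \<in> Hdom" for xi
    using fun_cong[OF restrict_opsum_pi_form[OF assms], of xi] that by simp
  show ?thesis
  proof (intro iffI ballI)
    assume "\<forall>xi\<in>Hdom. opsum (pi_form \<theta> K \<gamma>) L xi = (\<lambda>x. 0)"
    then show "(\<lambda>y. \<Sum>w\<leftarrow>L. form_kernel \<theta> K \<gamma> w y) = (\<lambda>y. 0)"
      by (intro kernel_op_determines_kernel[OF bilinear_theta]) (simp add: op[symmetric])
  next
    fix xi :: "int^'n \<Rightarrow> complex^'s"
    assume "(\<lambda>y. \<Sum>w\<leftarrow>L. form_kernel \<theta> K \<gamma> w y) = (\<lambda>y. 0)" and "xi \<in> Hdom"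
    then show "opsum (pi_form \<theta> K \<gamma>) L xi = (\<lambda>x. 0)"
      by (simp add: op kernel_op_zero)
  qed
qed

lemma dform_kernel_sums_of_junk_forms_eq_clifford_kernels:
  "{(\<lambda>y. \<Sum>w\<leftarrow>L. dform_kernel \<theta> K \<gamma> w y) | L.
      (\<forall>w\<in>set L. fst w \<in> Atheta \<and> set (snd w) \<subseteq> Atheta \<and> length (snd w) = Suc k)
      \<and> (\<forall>xi\<in>Hdom. opsum (pi_form \<theta> K \<gamma>) L xi = (\<lambda>x. 0))}
    = clifford_kernels \<gamma> k"
  unfolding dform_kernel_sums_of_junk_eq_clifford_kernels[symmetric]
  using opsum_pi_form_vanishes_iff by (intro Collect_cong ex_cong1) auto

end

theorem lemma7p2:
  fixes \<theta> :: "real^'n::finite \<Rightarrow> real^'n \<Rightarrow> real"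
    and K :: "'n set"
    and \<gamma> :: "real^'n \<Rightarrow> complex^'s::finite^'s"
    and m :: nat
  assumes theta_bil: "bilinear \<theta>"
    and theta_antisym: "\<And>x y. \<theta> x y = - \<theta> y x"
    and gamma_lin: "linear \<gamma>"
    and gamma_cliff: "\<And>v. \<gamma> v ** \<gamma> v = mat (complex_of_real (qform K v))"
    and spinor_dim: "CARD('s) = 2 ^ (CARD('n) div 2)"
  shows "(1 \<le> m \<longrightarrow>
      {restrict (opsum (pi_form \<theta> K \<gamma>) L) Hdom | L.
         \<forall>w\<in>set L. fst w \<in> Atheta \<and> set (snd w) \<subseteq> Atheta \<and> length (snd w) = m}
    = {restrict (opsum (gamma_op \<theta> \<gamma>) L) Hdom | L.
         \<forall>w\<in>set L. fst w \<in> Atheta \<and> length (snd w) = m})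
   \<and> (2 \<le> m \<longrightarrow>
      {restrict (opsum (pi_dform \<theta> K \<gamma>) L) Hdom | L.
         (\<forall>w\<in>set L. fst w \<in> Atheta \<and> set (snd w) \<subseteq> Atheta \<and> length (snd w) = m - 1)
         \<and> (\<forall>xi\<in>Hdom. opsum (pi_form \<theta> K \<gamma>) L xi = (\<lambda>x. 0))}
    = {restrict (opsum (gamma_op \<theta> \<gamma>) L) Hdom | L.
         \<forall>w\<in>set L. fst w \<in> Atheta \<and> length (snd w) = m - 2})"
proof -
  interpret nc_torus_dirac \<theta> K \<gamma>
    using theta_bil gamma_lin gamma_cliff by (simp add: nc_torus_dirac_def)
  have forms: "{restrict (opsum (pi_form \<theta> K \<gamma>) L) Hdom | L.
         \<forall>w\<in>set L. fst w \<in> Atheta \<and> set (snd w) \<subseteq> Atheta \<and> length (snd w) = m}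
    = {restrict (opsum (gamma_op \<theta> \<gamma>) L) Hdom | L. \<forall>w\<in>set L. fst w \<in> Atheta \<and> length (snd w) = m}"
    using form_kernel_sums_eq_clifford_kernels[of m]
    by (intro restrict_opsum_sets_eq[where X = "\<lambda>L y. \<Sum>w\<leftarrow>L. form_kernel \<theta> K \<gamma> w y" and Y = "clifford_kernel \<gamma>"])
       (auto intro!: restrict_opsum_pi_form restrict_opsum_gamma_op simp: clifford_kernels_def)
  have junk: "{restrict (opsum (pi_dform \<theta> K \<gamma>) L) Hdom | L.
         (\<forall>w\<in>set L. fst w \<in> Atheta \<and> set (snd w) \<subseteq> Atheta \<and> length (snd w) = Suc k)
         \<and> (\<forall>xi\<in>Hdom. opsum (pi_form \<theta> K \<gamma>) L xi = (\<lambda>x. 0))}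
    = {restrict (opsum (gamma_op \<theta> \<gamma>) L) Hdom | L. \<forall>w\<in>set L. fst w \<in> Atheta \<and> length (snd w) = k}" for k
    using dform_kernel_sums_of_junk_forms_eq_clifford_kernels[of k]
    by (intro restrict_opsum_sets_eq[where X = "\<lambda>L y. \<Sum>w\<leftarrow>L. dform_kernel \<theta> K \<gamma> w y" and Y = "clifford_kernel \<gamma>"])
       (auto intro!: restrict_opsum_pi_dform restrict_opsum_gamma_op simp: clifford_kernels_def)
  have "2 \<le> m \<Longrightarrow> m - 1 = Suc (m - 2)"
    by arith
  then show ?thesis
    using forms junk[of "m - 2"] by auto
qed

end
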